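(* Let $N=1$ and $p>1$. Then the equation $-u''=|u|^{p-1}u+M|u'|^{\frac{2p}{p+1}}$ admits a ground state $u$ if and only if $M\le-\mu^*(1)$. Such a ground state satisfies $u(r)\sim U_{2,M}(r)$ as $r\to\infty$. Furthermore, if $M<-\mu^*(1)$ there exists a positive singular solution $u$ on $(0,\infty)$ which satisfies $u(r)\sim U_{1,M}(r)$ as $r\to0$ and $u(r)\sim U_{2,M}(r)$ as $r\to\infty$.
   Context: A ground state is a nonnegative $u\in C^2([0,\infty))$ with $u'(0)=0$ solving $-u''=|u|^{p-1}u+M|u'|^{\frac{2p}{p+1}}$ on $(0,\infty)$. Let $\mu^*(1)=(p+1)\left(\frac{p+1}{2p}\right)^{\frac{p}{p+1}}$ and $K=-\frac{p+1}{p-1}$. For $M<-\mu^*(1)$ the equation $X^{p-1}+M\left(\frac{2}{p-1}\right)^{\frac{2p}{p+1}}X^{\frac{p-1}{p+1}}-\frac{2K}{p-1}=0$ has exactly two positive roots $X_{1,M}<X_{2,M}$, and for $M=-\mu^*(1)$ a unique positive root, denoted $X_{1,M}=X_{2,M}$. Set $U_{j,M}(r)=X_{j,M}r^{-\frac{2}{p-1}}$. $f\sim g$ means $f/g\to1$. *)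

theory Defs
  imports "HOL-Analysis.Analysis" "HOL-Library.Landau_Symbols"
begin

definition mu_star1 :: "real \<Rightarrow> real" where
  "mu_star1 p = (p + 1) * ((p + 1) / (2 * p)) powr (p / (p + 1))"

definition Kc :: "real \<Rightarrow> real" where
  "Kc p = - (p + 1) / (p - 1)"

definition Xeq :: "real \<Rightarrow> real \<Rightarrow> real \<Rightarrow> real" where
  "Xeq p M X = X powr (p - 1) + M * (2 / (p - 1)) powr (2 * p / (p + 1)) * X powr ((p - 1) / (p + 1))
               - 2 * Kc p / (p - 1)"

definition Xroots :: "real \<Rightarrow> real \<Rightarrow> real set" where
  "Xroots p M = {X. X > 0 \<and> Xeq p M X = 0}"

definition X1 :: "real \<Rightarrow> real \<Rightarrow> real" where
  "X1 p M = Inf (Xroots p M)"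

definition X2 :: "real \<Rightarrow> real \<Rightarrow> real" where
  "X2 p M = Sup (Xroots p M)"

definition U1 :: "real \<Rightarrow> real \<Rightarrow> real \<Rightarrow> real" where
  "U1 p M r = X1 p M * r powr (- 2 / (p - 1))"

definition U2 :: "real \<Rightarrow> real \<Rightarrow> real \<Rightarrow> real" where
  "U2 p M r = X2 p M * r powr (- 2 / (p - 1))"

definition ground_state :: "real \<Rightarrow> real \<Rightarrow> (real \<Rightarrow> real) \<Rightarrow> bool" where
  "ground_state p M u \<longleftrightarrow>
     (\<exists>u1 u2.
        (\<forall>r\<ge>0. (u has_real_derivative u1 r) (at r within {0..}) \<and>
                (u1 has_real_derivative u2 r) (at r within {0..})) \<and>
        continuous_on {0..} u2 \<and>
        u1 0 = 0 \<and>
        (\<forall>r\<ge>0. u r \<ge> 0) \<and>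
        (\<exists>r\<ge>0. u r \<noteq> 0) \<and>
        (\<forall>r>0. - u2 r = \<bar>u r\<bar> powr (p - 1) * u r + M * \<bar>u1 r\<bar> powr (2 * p / (p + 1))))"

definition pos_solution :: "real \<Rightarrow> real \<Rightarrow> (real \<Rightarrow> real) \<Rightarrow> bool" where
  "pos_solution p M u \<longleftrightarrow>
     (\<exists>u1 u2.
        (\<forall>r>0. (u has_real_derivative u1 r) (at r) \<and> (u1 has_real_derivative u2 r) (at r)) \<and>
        continuous_on {0<..} u2 \<and>
        (\<forall>r>0. u r > 0) \<and>
        (\<forall>r>0. - u2 r = \<bar>u r\<bar> powr (p - 1) * u r + M * \<bar>u1 r\<bar> powr (2 * p / (p + 1))))"

end

theory Submission
  imports Defs
begin

(* With a = 2/(p-1), the phase variable s = u'^2 / (2 u^(p+1)) turns the equation into the first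
   order equation s' = (u'/u) g(s), where g(s) = -M (2s)^(p/(p+1)) - 1 - (p+1) s. The function g
   is concave with g(0) = -1, and its maximum is nonnegative exactly when M <= -mu*(1). A power
   profile X r^(-a) has constant s, and X solves the algebraic equation iff g vanishes at that s;
   so X_2 corresponds to the smallest zero s_1 of g and X_1 to the largest zero s_2.

   Along a ground state u > 0 and u' < 0, and s increases from s(0) = 0. If g < -delta everywhere,
   s + delta ln u is monotone, which keeps u' below a negative constant, contradicting u > 0;
   hence M <= -mu*(1). Then s increases to s_1, and u^(-1/a) / r tends to sqrt(2 s_1) / a, i.e.
   u ~ U_2 at infinity.

   Conversely, solutions are obtained by quadrature in the phase plane. The ground state comes
   from integrating -ln u and r as functions of t = sqrt s on (-sqrt s_1, sqrt s_1). For
   M < -mu*(1), g > 0 between its zeros, and s can run from s_2 to s_1 while ln(u^(-1/a)) runs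
   through the reals; this gives the singular solution with u ~ U_1 at 0 and u ~ U_2 at infinity. *)

lemma powr_le_tangent:
  fixes t x s :: real
  assumes "0 < t" "t < 1" "x > 0" "s \<ge> 0"
  shows "s powr t \<le> x powr t + t * x powr (t - 1) * (s - x)"
proof (cases "s = 0")
  case True
  have "x powr (t - 1) * x = x powr t" using assms by (simp add: powr_diff)
  then show ?thesis using True assms by (simp add: algebra_simps)
next
  case False
  then have "s > 0" using assms by simp
  have "(s/x) powr t * 1 powr (1 - t) \<le> t * (s/x) + (1 - t) * 1"
    by (rule Youngs_inequality_0) (use assms \<open>s > 0\<close> in auto)
  then have "x powr t * (s/x) powr t \<le> x powr t * (t * (s/x) + (1 - t))"
    by (intro mult_left_mono) auto
  moreover have "x powr t * (s/x) powr t = s powr t"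
    using assms \<open>s > 0\<close> by (simp add: powr_divide)
  moreover have "x powr t * (t * (s/x) + (1 - t)) = x powr t + t * x powr (t - 1) * (s - x)"
    using assms by (simp add: powr_diff field_simps)
  ultimately show ?thesis by simp
qed

lemma first_crossing:
  fixes f :: "real \<Rightarrow> real"
  assumes "a \<le> b" "continuous_on {a..b} f" "f a < c" "c \<le> f b"
  obtains x where "a < x" "x \<le> b" "f x = c" "\<And>t. a \<le> t \<Longrightarrow> t < x \<Longrightarrow> f t < c"
proof -
  define T where "T = {a..b} \<inter> f -` {c..}"
  have "closed T"
    unfolding T_def by (rule continuous_closed_preimage) (use assms in auto)
  moreover have "bdd_below T" "b \<in> T"
    unfolding T_def using assms by auto
  ultimately have x: "Inf T \<in> T" and least: "\<And>t. t \<in> T \<Longrightarrow> Inf T \<le> t"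
    using closed_contains_Inf cInf_lower by blast+
  have below: "f t < c" if "a \<le> t" "t < Inf T" for t
    using least[of t] x that unfolding T_def by force
  have "a \<le> Inf T" "c \<le> f (Inf T)" using x unfolding T_def by auto
  then have "a < Inf T" using assms(3) by (cases "Inf T = a") auto
  moreover have "f (Inf T) = c"
  proof (rule ccontr)
    assume "f (Inf T) \<noteq> c"
    then have "c < f (Inf T)" using x unfolding T_def by auto
    moreover have "continuous_on {a..Inf T} f"
      using x unfolding T_def by (auto intro: continuous_on_subset[OF assms(2)])
    ultimately obtain t where "a \<le> t" "t \<le> Inf T" "f t = c"
      using IVT'[of f a c "Inf T"] assms(3) \<open>a < Inf T\<close> by auto
    then show False using below[of t] \<open>c < f (Inf T)\<close> by (cases "t = Inf T") auto
  qed
  ultimately show ?thesis using that x below unfolding T_def by auto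
qed

lemma last_crossing:
  fixes f :: "real \<Rightarrow> real"
  assumes "a \<le> b" "continuous_on {a..b} f" "c \<le> f a" "f b < c"
  obtains x where "a \<le> x" "x < b" "f x = c" "\<And>t. x < t \<Longrightarrow> t \<le> b \<Longrightarrow> f t < c"
proof -
  define T where "T = {a..b} \<inter> f -` {c..}"
  have "closed T"
    unfolding T_def by (rule continuous_closed_preimage) (use assms in auto)
  moreover have "bdd_above T" "a \<in> T"
    unfolding T_def using assms by auto
  ultimately have x: "Sup T \<in> T" and greatest: "\<And>t. t \<in> T \<Longrightarrow> t \<le> Sup T"
    using closed_contains_Sup cSup_upper by blast+
  have above: "f t < c" if "Sup T < t" "t \<le> b" for t
    using greatest[of t] x that unfolding T_def by force
  have "Sup T \<le> b" "c \<le> f (Sup T)" using x unfolding T_def by auto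
  then have "Sup T < b" using assms(4) by (cases "Sup T = b") auto
  moreover have "f (Sup T) = c"
  proof (rule ccontr)
    assume "f (Sup T) \<noteq> c"
    then have "c < f (Sup T)" using x unfolding T_def by auto
    moreover have "continuous_on {Sup T..b} f"
      using x unfolding T_def by (auto intro: continuous_on_subset[OF assms(2)])
    ultimately obtain t where "Sup T \<le> t" "t \<le> b" "f t = c"
      using IVT2'[of f b c "Sup T"] assms(4) \<open>Sup T < b\<close> by auto
    then show False using above[of t] \<open>c < f (Sup T)\<close> by (cases "t = Sup T") auto
  qed
  ultimately show ?thesis using that x above unfolding T_def by auto
qed

lemma gronwall_zero_forward:
  fixes E E' :: "real \<Rightarrow> real"
  assumes "a \<le> b" "C \<ge> 0" "continuous_on {a..b} E"
    and "\<And>t. a < t \<Longrightarrow> t < b \<Longrightarrow> (E has_real_derivative E' t) (at t)"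
    and "\<And>t. a < t \<Longrightarrow> t < b \<Longrightarrow> E' t \<le> C * E t"
    and "E a = 0" "E b \<ge> 0"
  shows "E b = 0"
proof -
  have "E b * exp (- C * b) \<le> E a * exp (- C * a)"
  proof (rule DERIV_nonpos_imp_decreasing_open[OF assms(1)])
    fix t assume t: "a < t" "t < b"
    have "((\<lambda>t. E t * exp (- C * t)) has_real_derivative (E' t - C * E t) * exp (- C * t)) (at t)"
      by (auto intro!: derivative_eq_intros assms(4) t simp: algebra_simps)
    moreover have "(E' t - C * E t) * exp (- C * t) \<le> 0"
      using assms(5)[OF t] by (simp add: mult_nonpos_nonneg)
    ultimately show "\<exists>y. ((\<lambda>t. E t * exp (- C * t)) has_real_derivative y) (at t) \<and> y \<le> 0"
      by blast
  qed (intro continuous_intros assms(3))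
  then show ?thesis using assms(6,7) by (simp add: mult_le_0_iff)
qed

lemma gronwall_zero_backward:
  fixes E E' :: "real \<Rightarrow> real"
  assumes "a \<le> b" "C \<ge> 0" "continuous_on {a..b} E"
    and "\<And>t. a < t \<Longrightarrow> t < b \<Longrightarrow> (E has_real_derivative E' t) (at t)"
    and "\<And>t. a < t \<Longrightarrow> t < b \<Longrightarrow> - E' t \<le> C * E t"
    and "E b = 0" "E a \<ge> 0"
  shows "E a = 0"
proof -
  have "E a * exp (C * a) \<le> E b * exp (C * b)"
  proof (rule DERIV_nonneg_imp_increasing_open[OF assms(1)])
    fix t assume t: "a < t" "t < b"
    have "((\<lambda>t. E t * exp (C * t)) has_real_derivative (E' t + C * E t) * exp (C * t)) (at t)"
      by (auto intro!: derivative_eq_intros assms(4) t simp: algebra_simps)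
    moreover have "(E' t + C * E t) * exp (C * t) \<ge> 0"
      using assms(5)[OF t] by simp
    ultimately show "\<exists>y. ((\<lambda>t. E t * exp (C * t)) has_real_derivative y) (at t) \<and> y \<ge> 0"
      by blast
  qed (intro continuous_intros assms(3))
  then show ?thesis using assms(6,7) by (simp add: mult_le_0_iff)
qed

lemma antiderivative_vanishing_at:
  fixes a b :: ereal and f :: "real \<Rightarrow> real"
  assumes "a < ereal c" "ereal c < b" and "\<And>x. a < ereal x \<Longrightarrow> ereal x < b \<Longrightarrow> isCont f x"
  obtains F where "\<And>x. a < ereal x \<Longrightarrow> ereal x < b \<Longrightarrow> (F has_real_derivative f x) (at x)" "F c = 0"
proof -
  obtain F where F: "\<And>x. a < ereal x \<Longrightarrow> ereal x < b \<Longrightarrow> (F has_vector_derivative f x) (at x)"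
    using einterval_antiderivative[of a b f] assms by (metis order.strict_trans)
  show ?thesis
  proof (rule that[of "\<lambda>x. F x - F c"])
    fix x assume "a < ereal x" "ereal x < b"
    then show "((\<lambda>x. F x - F c) has_real_derivative f x) (at x)"
      using F by (auto intro!: derivative_eq_intros simp: has_real_derivative_iff_has_vector_derivative)
  qed simp
qed

lemma has_real_derivative_inv_into:
  fixes f :: "real \<Rightarrow> real"
  assumes "open S" "inj_on f S" "y \<in> f ` S"
    and "\<And>x. x \<in> S \<Longrightarrow> (f has_real_derivative f' x) (at x)" "\<And>x. x \<in> S \<Longrightarrow> f' x \<noteq> 0"
  shows "(inv_into S f has_real_derivative inverse (f' (inv_into S f y))) (at y)"
proof -
  let ?x = "inv_into S f y"
  have "?x \<in> S" "f ?x = y" using assms(3) by (auto intro: inv_into_into f_inv_into_f)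
  moreover have "continuous_on S f"
    using assms(4) by (blast intro: continuous_at_imp_continuous_on DERIV_isCont)
  ultimately have "(inv_into S f has_derivative (*) (inverse (f' ?x))) (at y)"
    using assms by (intro has_derivative_inverse_strong_x[of S "inv_into S f" y f "\<lambda>h. f' ?x * h"])
      (auto simp: has_field_derivative_def o_def fun_eq_iff)
  then show ?thesis unfolding has_field_derivative_def .
qed

lemma tendsto_ratio_at_top_of_deriv:
  fixes f f' :: "real \<Rightarrow> real"
  assumes "\<forall>\<^sub>F x in at_top. (f has_real_derivative f' x) (at x)" "(f' \<longlongrightarrow> c) at_top"
  shows "((\<lambda>x. f x / x) \<longlongrightarrow> c) at_top"
  by (rule lhospital_at_top_at_top[where g' = "\<lambda>_. 1"])
    (use assms in \<open>auto intro!: derivative_eq_intros filterlim_ident\<close>)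

lemma asymp_equiv_powr_of_ratio:
  fixes w u :: "real \<Rightarrow> real"
  assumes "c > 0" "((\<lambda>r. w r / r) \<longlongrightarrow> c) F"
    and "\<forall>\<^sub>F r in F. r > 0" "\<forall>\<^sub>F r in F. u r = w r powr (- a)"
  shows "u \<sim>[F] (\<lambda>r. c powr (- a) * r powr (- a))"
proof (rule asymp_equivI')
  have "((\<lambda>r. (w r / r / c) powr (- a)) \<longlongrightarrow> (c / c) powr (- a)) F"
    using assms(1) by (intro tendsto_intros assms(2)) auto
  moreover have "\<forall>\<^sub>F r in F. w r / r > 0"
    using assms(1,2) by (simp add: order_tendstoD(1))
  with assms(3,4) have "\<forall>\<^sub>F r in F. (w r / r / c) powr (- a) = u r / (c powr (- a) * r powr (- a))"
    by eventually_elim (use assms(1) in \<open>auto simp: powr_divide powr_mult zero_less_divide_iff\<close>)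
  ultimately show "((\<lambda>r. u r / (c powr (- a) * r powr (- a))) \<longlongrightarrow> 1) F"
    using assms(1) by (simp add: tendsto_cong)
qed

lemma powr_less_powr_iff:
  fixes x y a :: real
  assumes "a > 0" "x \<ge> 0" "y \<ge> 0"
  shows "x powr a < y powr a \<longleftrightarrow> x < y"
  using powr_less_mono2[of a x y] powr_less_mono2[of a y x] assms by (cases x y rule: linorder_cases) auto

lemma powr_le_powr_iff:
  fixes x y a :: real
  assumes "a > 0" "x \<ge> 0" "y \<ge> 0"
  shows "x powr a \<le> y powr a \<longleftrightarrow> x \<le> y"
  using powr_less_powr_iff[OF assms(1,3,2)] by linarith

section \<open>The phase function and its zeros\<close>

text \<open>Along a positive solution, \<open>s = u'\<^sup>2 / (2 u\<^bsup>p+1\<^esup>)\<close> satisfies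
  \<open>s' = (u'/u) phase_g p M s\<close> (lemma \<open>sfun_deriv\<close>).\<close>

definition phase_g :: "real \<Rightarrow> real \<Rightarrow> real \<Rightarrow> real" where
  "phase_g p M s = - M * (2 * s) powr (p / (p + 1)) - 1 - (p + 1) * s"

lemma phase_g_eq:
  "s \<ge> 0 \<Longrightarrow> phase_g p M s = - M * 2 powr (p/(p+1)) * s powr (p/(p+1)) - 1 - (p+1) * s"
  unfolding phase_g_def by (simp add: powr_mult)

lemma phase_g_0 [simp]: "phase_g p M 0 = -1"
  unfolding phase_g_def by simp

lemma phase_g_le_tangent:
  assumes "p > 1" "M \<le> 0" "x > 0" "s \<ge> 0"
  shows "phase_g p M s \<le> phase_g p M x
           + (- M * 2 powr (p/(p+1)) * (p/(p+1)) * x powr (p/(p+1) - 1) - (p+1)) * (s - x)"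
proof -
  define A where "A = - M * 2 powr (p/(p+1))"
  have "A \<ge> 0" unfolding A_def using assms by (simp add: mult_nonpos_nonneg)
  moreover have "s powr (p/(p+1)) \<le> x powr (p/(p+1)) + p/(p+1) * x powr (p/(p+1) - 1) * (s - x)"
    by (rule powr_le_tangent) (use assms in auto)
  ultimately have "A * s powr (p/(p+1)) \<le> A * (x powr (p/(p+1)) + p/(p+1) * x powr (p/(p+1) - 1) * (s - x))"
    by (rule mult_left_mono[rotated])
  moreover have "phase_g p M s = A * s powr (p/(p+1)) - 1 - (p+1) * s"
    "phase_g p M x = A * x powr (p/(p+1)) - 1 - (p+1) * x"
    using assms unfolding A_def by (simp_all add: phase_g_eq)
  moreover have "A * x powr (p/(p+1)) - 1 - (p+1) * x + (A * (p/(p+1)) * x powr (p/(p+1) - 1) - (p+1)) * (s - x)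
      = A * (x powr (p/(p+1)) + p/(p+1) * x powr (p/(p+1) - 1) * (s - x)) - 1 - (p+1) * s"
    by (simp add: algebra_simps)
  ultimately show ?thesis unfolding A_def by linarith
qed

lemma phase_g_concave:
  assumes "p > 1" "M \<le> 0" "a \<ge> 0" "b \<ge> 0" "0 \<le> l" "l \<le> 1"
  shows "(1 - l) * phase_g p M a + l * phase_g p M b \<le> phase_g p M ((1 - l) * a + l * b)"
proof (cases "(1 - l) * a + l * b = 0")
  case True
  then have "(1 - l) * a = 0" "l * b = 0"
    using assms by (smt (verit) mult_nonneg_nonneg)+
  then show ?thesis using True assms by (cases "l = 0"; cases "l = 1") auto
next
  case False
  define c where "c = (1 - l) * a + l * b"
  have "c > 0" using False assms unfolding c_def by (smt (verit) mult_nonneg_nonneg)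
  define K where "K = - M * 2 powr (p/(p+1)) * (p/(p+1)) * c powr (p/(p+1) - 1) - (p+1)"
  have "phase_g p M a \<le> phase_g p M c + K * (a - c)"
    unfolding K_def by (rule phase_g_le_tangent) (use assms \<open>c > 0\<close> in auto)
  moreover have "phase_g p M b \<le> phase_g p M c + K * (b - c)"
    unfolding K_def by (rule phase_g_le_tangent) (use assms \<open>c > 0\<close> in auto)
  ultimately have "(1 - l) * phase_g p M a + l * phase_g p M b
      \<le> (1 - l) * (phase_g p M c + K * (a - c)) + l * (phase_g p M c + K * (b - c))"
    using assms by (intro add_mono mult_left_mono) auto
  also have "\<dots> = phase_g p M c" unfolding c_def by (simp add: algebra_simps)
  finally show ?thesis unfolding c_def .
qed

lemma continuous_on_phase_g_abs: "p > 1 \<Longrightarrow> continuous_on UNIV (\<lambda>s. phase_g p M \<bar>s\<bar>)"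
  unfolding phase_g_def
  by (intro continuous_intros continuous_on_powr') (auto intro!: continuous_intros)

lemma continuous_on_phase_g: "p > 1 \<Longrightarrow> continuous_on {0..} (phase_g p M)"
  using continuous_on_subset[OF continuous_on_phase_g_abs[of p M], of "{0..}"]
  by (rule continuous_on_eq) auto

lemma isCont_phase_g:
  assumes "p > 1" "s > 0"
  shows "isCont (phase_g p M) s"
proof -
  have "continuous_on {0<..} (phase_g p M)"
    by (rule continuous_on_subset[OF continuous_on_phase_g]) (use assms in auto)
  then show ?thesis using assms by (simp add: continuous_on_eq_continuous_at)
qed

lemma isCont_phase_g_square: "p > 1 \<Longrightarrow> isCont (\<lambda>t. phase_g p M (t\<^sup>2)) x"
  using continuous_at_compose[of x power2 "\<lambda>s. phase_g p M \<bar>s\<bar>"] continuous_on_phase_g_abs[of p M]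
  by (simp add: o_def continuous_on_eq_continuous_at)

lemma phase_g_eventually_le_neg1:
  assumes "p > 1"
  obtains S0 where "S0 > 0" "\<And>s. s \<ge> S0 \<Longrightarrow> phase_g p M s \<le> -1"
proof -
  define A where "A = \<bar>M\<bar> * 2 powr (p/(p+1))"
  define S0 where "S0 = (A/(p+1)) powr (p+1) + 1"
  have "S0 > 0" unfolding S0_def by (simp add: add_nonneg_pos)
  moreover have "phase_g p M s \<le> -1" if "s \<ge> S0" for s
  proof -
    have "s > 0" using that \<open>S0 > 0\<close> by simp
    have "(A/(p+1)) powr (p+1) \<le> s"
      using that unfolding S0_def by simp
    then have "((A/(p+1)) powr (p+1)) powr (1/(p+1)) \<le> s powr (1/(p+1))"
      using assms by (intro powr_mono2) auto
    then have "A/(p+1) \<le> s powr (1/(p+1))"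
      using assms by (simp add: A_def powr_powr)
    have "A * s powr (p/(p+1)) = A/(p+1) * s powr (p/(p+1)) * (p+1)"
      using assms by simp
    also have "\<dots> \<le> s powr (1/(p+1)) * s powr (p/(p+1)) * (p+1)"
      using \<open>A/(p+1) \<le> s powr (1/(p+1))\<close> assms by (intro mult_right_mono) auto
    also have "1/(p+1) + p/(p+1) = 1"
      using assms by (simp add: field_simps)
    then have "s powr (1/(p+1)) * s powr (p/(p+1)) = s"
      using \<open>s > 0\<close> by (simp flip: powr_add)
      finally have "A * s powr (p/(p+1)) \<le> (p+1) * s" by (simp add: mult.commute)
    moreover have "- M * 2 powr (p/(p+1)) * s powr (p/(p+1)) \<le> A * s powr (p/(p+1))"
      unfolding A_def by (intro mult_right_mono) auto
    ultimately show ?thesis using \<open>s > 0\<close> by (simp add: phase_g_eq)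
  qed
  ultimately show ?thesis by (rule that)
qed

definition g_argmax :: "real \<Rightarrow> real \<Rightarrow> real" where
  "g_argmax p M = (- M * p * 2 powr (p/(p+1)) / (p+1)\<^sup>2) powr (p+1)"

lemma g_argmax_pos: "p > 1 \<Longrightarrow> M < 0 \<Longrightarrow> g_argmax p M > 0"
  unfolding g_argmax_def by (simp add: mult_neg_pos)

lemma phase_g_tangent_slope_argmax:
  assumes "p > 1" "M < 0"
  shows "- M * 2 powr (p/(p+1)) * (p/(p+1)) * g_argmax p M powr (p/(p+1) - 1) = p + 1"
proof -
  define k where "k = - M * p * 2 powr (p/(p+1)) / (p+1)\<^sup>2"
  have "k > 0" unfolding k_def using assms by (intro divide_pos_pos mult_pos_pos) auto
  have "(p+1) * (p/(p+1) - 1) = -1" using assms by (simp add: field_simps)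
  then have "g_argmax p M powr (p/(p+1) - 1) = 1 / k"
    unfolding g_argmax_def k_def[symmetric] using \<open>k > 0\<close> by (simp add: powr_powr powr_minus divide_inverse)
  then show ?thesis
    using assms \<open>k > 0\<close> unfolding k_def by (simp add: field_simps power2_eq_square)
qed

lemma phase_g_le_argmax:
  assumes "p > 1" "M < 0" "s \<ge> 0"
  shows "phase_g p M s \<le> phase_g p M (g_argmax p M)"
  using phase_g_le_tangent[of p M "g_argmax p M" s] phase_g_tangent_slope_argmax[of p M]
    g_argmax_pos[of p M] assms by simp

lemma phase_g_argmax:
  assumes "p > 1" "M < 0"
  shows "phase_g p M (g_argmax p M) = (p+1)/p * g_argmax p M - 1"
proof -
  define k where "k = - M * p * 2 powr (p/(p+1)) / (p+1)\<^sup>2"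
  have "k > 0" unfolding k_def using assms by (intro divide_pos_pos mult_pos_pos) auto
  have A: "- M * 2 powr (p/(p+1)) = k * (p+1)\<^sup>2 / p"
    unfolding k_def using assms by (simp add: field_simps)
  have "phase_g p M (g_argmax p M) = (- M * 2 powr (p/(p+1))) * k powr p - 1 - (p+1) * k powr (p+1)"
    using assms g_argmax_pos[OF assms] unfolding g_argmax_def k_def[symmetric]
    by (simp add: phase_g_eq powr_powr)
  also have "\<dots> = (p+1)\<^sup>2/p * (k * k powr p) - 1 - (p+1) * k powr (p+1)"
    unfolding A by simp
  also have "\<dots> = (p+1)/p * k powr (p+1) - 1"
    using assms \<open>k > 0\<close> by (simp add: powr_add field_simps power2_eq_square)
  finally show ?thesis unfolding g_argmax_def k_def .
qed

lemma mu_star1_pos: "p > 1 \<Longrightarrow> mu_star1 p > 0"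
  unfolding mu_star1_def by simp

lemma mu_star1_eq:
  assumes "p > 1"
  shows "mu_star1 p = (p/(p+1)) powr (1/(p+1)) * ((p+1)\<^sup>2 / (p * 2 powr (p/(p+1))))"
proof -
  define T where "T = 2 powr (p/(p+1))"
  define P1 where "P1 = p powr (1/(p+1))"
  define Pt where "Pt = p powr (p/(p+1))"
  define Q1 where "Q1 = (p+1) powr (1/(p+1))"
  define Qt where "Qt = (p+1) powr (p/(p+1))"
  have "1/(p+1) + p/(p+1) = 1" using assms by (simp add: field_simps)
  then have P: "P1 * Pt = p" and Q: "Q1 * Qt = p + 1"
    unfolding P1_def Pt_def Q1_def Qt_def using assms by (simp_all flip: powr_add)
  have pos: "T > 0" "P1 > 0" "Pt > 0" "Q1 > 0" "Qt > 0"
    unfolding T_def P1_def Pt_def Q1_def Qt_def using assms by auto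
  have "mu_star1 p = (p+1) * (Qt / (T * Pt))"
    unfolding mu_star1_def Qt_def Pt_def T_def using assms by (simp add: powr_divide powr_mult)
  also have "\<dots> = (Q1*Qt) * (Qt / (T * Pt))" using Q by simp
  also have "\<dots> = (P1/Q1) * ((Q1*Qt)\<^sup>2 / ((P1*Pt) * T))"
    using pos by (simp add: field_simps power2_eq_square)
  also have "P1/Q1 = (p/(p+1)) powr (1/(p+1))"
    unfolding P1_def Q1_def using assms by (simp add: powr_divide)
  finally show ?thesis unfolding P Q T_def .
qed

lemma phase_g_argmax_sign:
  assumes "p > 1" "M < 0"
  shows "phase_g p M (g_argmax p M) < 0 \<longleftrightarrow> - M < mu_star1 p"
    and "phase_g p M (g_argmax p M) \<le> 0 \<longleftrightarrow> - M \<le> mu_star1 p"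
proof -
  define k where "k = - M * p * 2 powr (p/(p+1)) / (p+1)\<^sup>2"
  define c where "c = (p/(p+1)) powr (1/(p+1))"
  define F where "F = (p+1)\<^sup>2 / (p * 2 powr (p/(p+1)))"
  have "F > 0" "c > 0"
    unfolding F_def c_def using assms by auto
  have "k > 0" unfolding k_def using assms by (intro divide_pos_pos mult_pos_pos) auto
  have "- M = k * F" "mu_star1 p = c * F"
    unfolding k_def F_def c_def mu_star1_eq[OF assms(1)] using assms by (auto simp: field_simps)
  then have lt: "- M < mu_star1 p \<longleftrightarrow> k powr (p+1) < c powr (p+1)"
    and le: "- M \<le> mu_star1 p \<longleftrightarrow> k powr (p+1) \<le> c powr (p+1)"
    using \<open>F > 0\<close> \<open>k > 0\<close> \<open>c > 0\<close> assms by (simp_all add: powr_less_powr_iff powr_le_powr_iff)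
  have c: "c powr (p+1) = p/(p+1)"
    unfolding c_def using assms by (simp add: powr_powr)
  have g: "phase_g p M (g_argmax p M) = (p+1)/p * k powr (p+1) - 1"
    using phase_g_argmax[OF assms] unfolding g_argmax_def k_def .
  show "phase_g p M (g_argmax p M) < 0 \<longleftrightarrow> - M < mu_star1 p"
    unfolding g lt c using assms by (simp add: field_simps)
  show "phase_g p M (g_argmax p M) \<le> 0 \<longleftrightarrow> - M \<le> mu_star1 p"
    unfolding g le c using assms by (simp add: field_simps)
qed

lemma neg_of_le_neg_mu_star1: "p > 1 \<Longrightarrow> M \<le> - mu_star1 p \<Longrightarrow> M < 0"
  using mu_star1_pos[of p] by linarith

lemma phase_g_argmax_nonneg: "p > 1 \<Longrightarrow> M \<le> - mu_star1 p \<Longrightarrow> phase_g p M (g_argmax p M) \<ge> 0"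
  using phase_g_argmax_sign(1)[of p M] neg_of_le_neg_mu_star1[of p M] by linarith

lemma phase_g_uniformly_neg:
  assumes "p > 1" "M > - mu_star1 p"
  obtains \<delta> where "\<delta> > 0" "\<And>s. s \<ge> 0 \<Longrightarrow> phase_g p M s \<le> - \<delta>"
proof (cases "M \<ge> 0")
  case True
  have "phase_g p M s \<le> -1" if "s \<ge> 0" for s
  proof -
    have "M * (2 * s) powr (p/(p+1)) \<ge> 0" "(p+1) * s \<ge> 0" using True that assms(1) by auto
    then show ?thesis unfolding phase_g_def by linarith
  qed
  then show ?thesis using that[of 1] by simp
next
  case False
  then have "phase_g p M (g_argmax p M) < 0" using phase_g_argmax_sign(1)[of p M] assms by simp
  then show ?thesis
    using that[of "- phase_g p M (g_argmax p M)"] phase_g_le_argmax[of p M] assms False by simp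
qed

definition g_zero1 :: "real \<Rightarrow> real \<Rightarrow> real" where
  "g_zero1 p M = Inf {s. 0 \<le> s \<and> phase_g p M s = 0}"

definition g_zero2 :: "real \<Rightarrow> real \<Rightarrow> real" where
  "g_zero2 p M = Sup {s. 0 \<le> s \<and> phase_g p M s = 0}"

lemma g_zero1_first_crossing:
  assumes "p > 1" "M \<le> - mu_star1 p"
  shows "0 < g_zero1 p M \<and> g_zero1 p M \<le> g_argmax p M \<and> phase_g p M (g_zero1 p M) = 0
    \<and> (\<forall>s. 0 \<le> s \<and> s < g_zero1 p M \<longrightarrow> phase_g p M s < 0)"
proof -
  have "0 \<le> g_argmax p M" using g_argmax_pos[of p M] neg_of_le_neg_mu_star1 assms by fastforce
  then obtain x where x: "0 < x" "x \<le> g_argmax p M" "phase_g p M x = 0"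
    and below: "\<And>t. 0 \<le> t \<Longrightarrow> t < x \<Longrightarrow> phase_g p M t < 0"
    using first_crossing[of 0 "g_argmax p M" "phase_g p M" 0] phase_g_argmax_nonneg[OF assms]
      continuous_on_subset[OF continuous_on_phase_g[OF assms(1)]] by auto
  have "g_zero1 p M = x"
    unfolding g_zero1_def
  proof (rule cInf_eq_minimum)
    show "x \<le> z" if "z \<in> {s. 0 \<le> s \<and> phase_g p M s = 0}" for z
      using that below[of z] by (cases "z < x") auto
  qed (use x in auto)
  then show ?thesis using x below by auto
qed

lemma g_zero1_pos: "p > 1 \<Longrightarrow> M \<le> - mu_star1 p \<Longrightarrow> 0 < g_zero1 p M"
  using g_zero1_first_crossing by blast

lemma phase_g_g_zero1: "p > 1 \<Longrightarrow> M \<le> - mu_star1 p \<Longrightarrow> phase_g p M (g_zero1 p M) = 0"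
  using g_zero1_first_crossing by blast

lemma phase_g_neg_below_g_zero1:
  "p > 1 \<Longrightarrow> M \<le> - mu_star1 p \<Longrightarrow> 0 \<le> s \<Longrightarrow> s < g_zero1 p M \<Longrightarrow> phase_g p M s < 0"
  using g_zero1_first_crossing by blast

lemma g_zero2_last_crossing:
  assumes "p > 1" "M \<le> - mu_star1 p"
  shows "g_argmax p M \<le> g_zero2 p M \<and> phase_g p M (g_zero2 p M) = 0
    \<and> (\<forall>s. g_zero2 p M < s \<longrightarrow> phase_g p M s < 0)"
proof -
  obtain S0 where S0: "S0 > 0" "\<And>s. s \<ge> S0 \<Longrightarrow> phase_g p M s \<le> -1"
    using phase_g_eventually_le_neg1[OF assms(1)] by blast
  define b where "b = max (g_argmax p M) S0 + 1"
  have "0 \<le> g_argmax p M" using g_argmax_pos[of p M] neg_of_le_neg_mu_star1 assms by fastforce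
  moreover have "phase_g p M b < 0" using S0(2)[of b] unfolding b_def by linarith
  moreover have "continuous_on {g_argmax p M..b} (phase_g p M)"
    by (rule continuous_on_subset[OF continuous_on_phase_g[OF assms(1)]]) (use \<open>0 \<le> g_argmax p M\<close> in auto)
  moreover have "g_argmax p M \<le> b" unfolding b_def by simp
  ultimately obtain x where x: "g_argmax p M \<le> x" "x < b" "phase_g p M x = 0"
    and above: "\<And>t. x < t \<Longrightarrow> t \<le> b \<Longrightarrow> phase_g p M t < 0"
    using last_crossing[of "g_argmax p M" b "phase_g p M" 0] phase_g_argmax_nonneg[OF assms] by blast
  have neg: "phase_g p M t < 0" if "x < t" for t
  proof (cases "t \<le> b")
    case False
    then have "S0 \<le> t" using max.cobounded2[of "g_argmax p M" S0] unfolding b_def by linarith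
    then show ?thesis using S0(2) by fastforce
  qed (use above that in blast)
  have "g_zero2 p M = x"
    unfolding g_zero2_def
  proof (rule cSup_eq_maximum)
    show "z \<le> x" if "z \<in> {s. 0 \<le> s \<and> phase_g p M s = 0}" for z
      using that neg[of z] by (cases "x < z") auto
  qed (use x \<open>0 \<le> g_argmax p M\<close> in auto)
  then show ?thesis using x neg by auto
qed

lemma phase_g_g_zero2: "p > 1 \<Longrightarrow> M \<le> - mu_star1 p \<Longrightarrow> phase_g p M (g_zero2 p M) = 0"
  using g_zero2_last_crossing by blast

lemma phase_g_neg_above_g_zero2:
  "p > 1 \<Longrightarrow> M \<le> - mu_star1 p \<Longrightarrow> g_zero2 p M < s \<Longrightarrow> phase_g p M s < 0"
  using g_zero2_last_crossing by blast

lemma g_zero1_le_argmax_le_g_zero2: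
  "p > 1 \<Longrightarrow> M \<le> - mu_star1 p \<Longrightarrow> g_zero1 p M \<le> g_argmax p M \<and> g_argmax p M \<le> g_zero2 p M"
  using g_zero1_first_crossing g_zero2_last_crossing by blast

lemma phase_g_zero_between:
  assumes "p > 1" "M \<le> - mu_star1 p" "s \<ge> 0" "phase_g p M s = 0"
  shows "g_zero1 p M \<le> s" "s \<le> g_zero2 p M"
  using phase_g_neg_below_g_zero1[OF assms(1,2,3)] phase_g_neg_above_g_zero2[OF assms(1,2), of s] assms(4)
  by (auto simp: not_less[symmetric])

lemma phase_g_ge_chord_g_zero1:
  assumes "p > 1" "M \<le> - mu_star1 p" "0 \<le> s" "s \<le> g_zero1 p M"
  shows "phase_g p M s \<ge> s / g_zero1 p M - 1"
proof -
  define l where "l = s / g_zero1 p M"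
  have "0 \<le> l" "l \<le> 1" "l * g_zero1 p M = s"
    unfolding l_def using assms g_zero1_pos[OF assms(1,2)] by auto
  then show ?thesis
    using phase_g_concave[of p M 0 "g_zero1 p M" l] phase_g_g_zero1[OF assms(1,2)]
      g_zero1_pos[OF assms(1,2)] neg_of_le_neg_mu_star1[OF assms(1,2)] assms(1)
    unfolding l_def by simp
qed

lemma phase_g_pos_between:
  assumes "p > 1" "M < - mu_star1 p" "g_zero1 p M < s" "s < g_zero2 p M"
  shows "phase_g p M s > 0"
proof -
  let ?s1 = "g_zero1 p M" and ?s2 = "g_zero2 p M" and ?x = "g_argmax p M"
  have M: "M \<le> - mu_star1 p" "M < 0" using assms neg_of_le_neg_mu_star1[of p M] by auto
  have "phase_g p M ?x > 0" using phase_g_argmax_sign(2)[OF assms(1) M(2)] assms(2) by linarith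
  then have x: "?s1 < ?x" "?x < ?s2"
    using g_zero1_le_argmax_le_g_zero2[OF assms(1) M(1)] phase_g_g_zero1[OF assms(1) M(1)]
      phase_g_g_zero2[OF assms(1) M(1)] by (metis order.not_eq_order_implies_strict less_irrefl)+
  have s1: "?s1 > 0" using g_zero1_pos[OF assms(1) M(1)] .
  obtain e l where "phase_g p M e = 0" "0 < l" "l \<le> 1" "e \<ge> 0" and "s = (1 - l) * e + l * ?x"
  proof (cases "s \<le> ?x")
    case True
    define l where "l = (s - ?s1) / (?x - ?s1)"
    have "?x - ?s1 > 0" using x by simp
    then have "0 < l" "l \<le> 1" "l * (?x - ?s1) = s - ?s1"
      unfolding l_def using True assms(3) by (simp_all add: pos_divide_le_eq)
    moreover have "(1 - l) * ?s1 + l * ?x = ?s1 + l * (?x - ?s1)" by (simp add: algebra_simps)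
    ultimately show ?thesis
      using that[of ?s1 l] s1 phase_g_g_zero1[OF assms(1) M(1)] by simp
  next
    case False
    define l where "l = (?s2 - s) / (?s2 - ?x)"
    have "?s2 - ?x > 0" using x by simp
    then have "0 < l" "l \<le> 1" "l * (?s2 - ?x) = ?s2 - s"
      unfolding l_def using False assms(4) by (simp_all add: pos_divide_le_eq)
    moreover have "(1 - l) * ?s2 + l * ?x = ?s2 - l * (?s2 - ?x)" by (simp add: algebra_simps)
    ultimately show ?thesis
      using that[of ?s2 l] s1 x phase_g_g_zero2[OF assms(1) M(1)] by simp
  qed
  moreover have "0 \<le> ?x" using s1 x by simp
  ultimately have "l * phase_g p M ?x \<le> phase_g p M s"
    using phase_g_concave[of p M e ?x l] assms(1) M(2) by simp
  moreover have "l * phase_g p M ?x > 0" using \<open>0 < l\<close> \<open>phase_g p M ?x > 0\<close> by simp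
  ultimately show ?thesis by simp
qed

lemma phase_g_le_lipschitz_g_zero1:
  assumes "p > 1" "M \<le> - mu_star1 p"
  obtains L where "L > 0" "\<And>s. g_zero1 p M \<le> s \<Longrightarrow> phase_g p M s \<le> L * (s - g_zero1 p M)"
proof -
  define K where "K = - M * 2 powr (p/(p+1)) * (p/(p+1)) * g_zero1 p M powr (p/(p+1) - 1) - (p+1)"
  have "phase_g p M s \<le> max K 1 * (s - g_zero1 p M)" if "g_zero1 p M \<le> s" for s
  proof -
    have "phase_g p M s \<le> phase_g p M (g_zero1 p M) + K * (s - g_zero1 p M)"
      unfolding K_def using assms that g_zero1_pos[OF assms] neg_of_le_neg_mu_star1[OF assms]
      by (intro phase_g_le_tangent) auto
    also have "\<dots> \<le> max K 1 * (s - g_zero1 p M)"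
      using that phase_g_g_zero1[OF assms] by (simp add: mult_right_mono)
    finally show ?thesis .
  qed
  then show ?thesis using that[of "max K 1"] by simp
qed

lemma phase_g_le_lipschitz_g_zero2:
  assumes "p > 1" "M \<le> - mu_star1 p"
  obtains L where "L > 0" "\<And>s. 0 \<le> s \<Longrightarrow> s \<le> g_zero2 p M \<Longrightarrow> phase_g p M s \<le> L * (g_zero2 p M - s)"
proof -
  define K where "K = - M * 2 powr (p/(p+1)) * (p/(p+1)) * g_zero2 p M powr (p/(p+1) - 1) - (p+1)"
  have "g_zero2 p M > 0"
    using g_zero1_pos[OF assms] g_zero1_le_argmax_le_g_zero2[OF assms] by linarith
  have "phase_g p M s \<le> max (- K) 1 * (g_zero2 p M - s)" if "0 \<le> s" "s \<le> g_zero2 p M" for s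
  proof -
    have "phase_g p M s \<le> phase_g p M (g_zero2 p M) + K * (s - g_zero2 p M)"
      unfolding K_def using assms that \<open>g_zero2 p M > 0\<close> neg_of_le_neg_mu_star1[OF assms]
      by (intro phase_g_le_tangent) auto
    also have "\<dots> = (- K) * (g_zero2 p M - s)"
      using phase_g_g_zero2[OF assms] by (simp add: algebra_simps)
    also have "\<dots> \<le> max (- K) 1 * (g_zero2 p M - s)"
      using that by (intro mult_right_mono) auto
    finally show ?thesis .
  qed
  then show ?thesis using that[of "max (- K) 1"] by simp
qed

section \<open>Power profiles and the roots of the algebraic equation\<close>

definition decay_exp :: "real \<Rightarrow> real" where
  "decay_exp p = 2 / (p - 1)"

text \<open>\<open>s_of_coeff p X\<close> is the constant value of \<open>u'\<^sup>2 / (2 u\<^bsup>p+1\<^esup>)\<close> along the power profile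
  \<open>u r = X r\<^bsup>-decay_exp p\<^esup>\<close>, and \<open>coeff_of_s p\<close> is its inverse.\<close>

definition s_of_coeff :: "real \<Rightarrow> real \<Rightarrow> real" where
  "s_of_coeff p X = (decay_exp p)\<^sup>2 * X powr (1 - p) / 2"

definition coeff_of_s :: "real \<Rightarrow> real \<Rightarrow> real" where
  "coeff_of_s p s = (sqrt (2 * s) / decay_exp p) powr (- decay_exp p)"

lemma decay_exp_pos: "p > 1 \<Longrightarrow> decay_exp p > 0"
  unfolding decay_exp_def by simp

lemma s_of_coeff_pos: "p > 1 \<Longrightarrow> X > 0 \<Longrightarrow> s_of_coeff p X > 0"
  unfolding s_of_coeff_def using decay_exp_pos[of p] by simp

lemma coeff_of_s_pos: "p > 1 \<Longrightarrow> s > 0 \<Longrightarrow> coeff_of_s p s > 0"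
  unfolding coeff_of_s_def using decay_exp_pos[of p] by simp

lemma coeff_of_s_s_of_coeff:
  assumes "p > 1" "X > 0"
  shows "coeff_of_s p (s_of_coeff p X) = X"
proof -
  define a where "a = decay_exp p"
  have "a > 0" unfolding a_def using decay_exp_pos[OF assms(1)] .
  have "sqrt (2 * s_of_coeff p X) = a * sqrt (X powr (1 - p))"
    unfolding s_of_coeff_def a_def[symmetric] using \<open>a > 0\<close> by (simp add: real_sqrt_mult)
  also have "sqrt (X powr (1 - p)) = X powr ((1 - p)/2)"
    using assms by (simp add: powr_half_sqrt[symmetric] powr_powr)
  finally have "coeff_of_s p (s_of_coeff p X) = X powr ((1 - p)/2 * (- a))"
    unfolding coeff_of_s_def a_def[symmetric] using \<open>a > 0\<close> by (simp add: powr_powr)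
  also have "(1 - p)/2 * (- a) = 1"
    unfolding a_def decay_exp_def using assms by (simp add: field_simps)
  finally show ?thesis using assms by simp
qed

lemma s_of_coeff_coeff_of_s:
  assumes "p > 1" "s > 0"
  shows "s_of_coeff p (coeff_of_s p s) = s"
proof -
  define a where "a = decay_exp p"
  have "a > 0" unfolding a_def using decay_exp_pos[OF assms(1)] .
  define c where "c = sqrt (2 * s) / a"
  have "c > 0" unfolding c_def using \<open>a > 0\<close> assms by simp
  have "coeff_of_s p s powr (1 - p) = c powr (- a * (1 - p))"
    unfolding coeff_of_s_def c_def a_def by (simp add: powr_powr)
  also have "- a * (1 - p) = 2"
    unfolding a_def decay_exp_def using assms by (simp add: field_simps)
  also have "c powr 2 = 2 * s / a\<^sup>2"
    using \<open>c > 0\<close> assms unfolding c_def by (simp add: powr_numeral power_divide)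
  finally show ?thesis unfolding s_of_coeff_def a_def[symmetric] using \<open>a > 0\<close> by simp
qed

lemma coeff_of_s_antimono:
  assumes "p > 1" "0 < s" "s \<le> t"
  shows "coeff_of_s p t \<le> coeff_of_s p s"
  unfolding coeff_of_s_def
  by (rule powr_mono2') (use decay_exp_pos[OF assms(1)] assms in \<open>auto intro: divide_right_mono\<close>)

lemma Xeq_eq_phase_g:
  assumes "p > 1" "X > 0"
  shows "Xeq p M X = - (X powr (p - 1) * phase_g p M (s_of_coeff p X))"
proof -
  define a where "a = decay_exp p"
  have "a > 0" unfolding a_def using decay_exp_pos[OF assms(1)] .
  define t where "t = p/(p+1)"
  have "(2 * s_of_coeff p X) powr t = (a\<^sup>2) powr t * X powr ((1 - p) * t)"
    unfolding s_of_coeff_def a_def[symmetric] using \<open>a > 0\<close> assms by (simp add: powr_mult powr_powr)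
  also have "(a\<^sup>2) powr t = a powr (2*p/(p+1))"
    using \<open>a > 0\<close> unfolding t_def by (simp add: powr_powr flip: powr_numeral)
  finally have e1: "(2 * s_of_coeff p X) powr t = a powr (2*p/(p+1)) * X powr ((1 - p) * t)" .
  have "(p - 1) + (1 - p) * t = (p - 1)/(p + 1)"
    unfolding t_def using assms by (simp add: field_simps)
  then have e2: "X powr (p - 1) * X powr ((1 - p) * t) = X powr ((p - 1)/(p + 1))"
    using assms by (simp flip: powr_add)
  have e3: "X powr (p - 1) * X powr (1 - p) = 1"
    using assms by (simp flip: powr_add)
  have rearrange: "y * ((2/x)\<^sup>2/2) = - 2 * (- y / x) / x" if "x \<noteq> 0" for x y :: real
    using that by (simp add: field_simps power2_eq_square)
  have e4: "(p + 1) * (a\<^sup>2/2) = - 2 * Kc p / (p - 1)"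
    unfolding a_def decay_exp_def Kc_def by (rule rearrange) (use assms in simp)
  have "- (X powr (p - 1) * phase_g p M (s_of_coeff p X))
      = M * a powr (2*p/(p+1)) * (X powr (p - 1) * X powr ((1 - p) * t)) + X powr (p - 1)
        + (p + 1) * (a\<^sup>2/2) * (X powr (p - 1) * X powr (1 - p))"
    unfolding phase_g_def t_def[symmetric] e1 unfolding s_of_coeff_def a_def[symmetric]
    by (simp add: algebra_simps)
  also have "\<dots> = Xeq p M X"
    unfolding e2 e3 e4 by (simp add: Xeq_def a_def decay_exp_def)
  finally show ?thesis ..
qed

lemma Xroots_iff:
  "p > 1 \<Longrightarrow> X \<in> Xroots p M \<longleftrightarrow> X > 0 \<and> phase_g p M (s_of_coeff p X) = 0"
  unfolding Xroots_def using Xeq_eq_phase_g[of p X M] by auto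

lemma X2_eq_coeff_of_g_zero1:
  assumes "p > 1" "M \<le> - mu_star1 p"
  shows "X2 p M = coeff_of_s p (g_zero1 p M)"
  unfolding X2_def
proof (rule cSup_eq_maximum)
  have s1: "g_zero1 p M > 0" by (rule g_zero1_pos[OF assms])
  show "coeff_of_s p (g_zero1 p M) \<in> Xroots p M"
    unfolding Xroots_iff[OF assms(1)]
    using coeff_of_s_pos[OF assms(1) s1] s_of_coeff_coeff_of_s[OF assms(1) s1] phase_g_g_zero1[OF assms]
    by simp
  fix X assume "X \<in> Xroots p M"
  then have X: "X > 0" "phase_g p M (s_of_coeff p X) = 0" unfolding Xroots_iff[OF assms(1)] by auto
  then have "g_zero1 p M \<le> s_of_coeff p X"
    using phase_g_zero_between(1)[OF assms] s_of_coeff_pos[OF assms(1)] by force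
  then show "X \<le> coeff_of_s p (g_zero1 p M)"
    using coeff_of_s_antimono[OF assms(1) s1] coeff_of_s_s_of_coeff[OF assms(1) X(1)] by metis
qed

lemma X1_eq_coeff_of_g_zero2:
  assumes "p > 1" "M \<le> - mu_star1 p"
  shows "X1 p M = coeff_of_s p (g_zero2 p M)"
  unfolding X1_def
proof (rule cInf_eq_minimum)
  have s2: "g_zero2 p M > 0"
    using g_zero1_pos[OF assms] g_zero1_le_argmax_le_g_zero2[OF assms] by linarith
  show "coeff_of_s p (g_zero2 p M) \<in> Xroots p M"
    unfolding Xroots_iff[OF assms(1)]
    using coeff_of_s_pos[OF assms(1) s2] s_of_coeff_coeff_of_s[OF assms(1) s2] phase_g_g_zero2[OF assms]
    by simp
  fix X assume "X \<in> Xroots p M"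
  then have X: "X > 0" "phase_g p M (s_of_coeff p X) = 0" unfolding Xroots_iff[OF assms(1)] by auto
  then have "s_of_coeff p X \<le> g_zero2 p M"
    using phase_g_zero_between(2)[OF assms] s_of_coeff_pos[OF assms(1)] by force
  then show "coeff_of_s p (g_zero2 p M) \<le> X"
    using coeff_of_s_antimono[OF assms(1) s_of_coeff_pos[OF assms(1) X(1)]]
      coeff_of_s_s_of_coeff[OF assms(1) X(1)] by metis
qed

section \<open>Behaviour of ground states\<close>

locale ground_state_profile =
  fixes p M :: real and u u' u'' :: "real \<Rightarrow> real"
  assumes p_gt_1: "p > 1"
    and u_deriv_within: "\<And>r. r \<ge> 0 \<Longrightarrow> (u has_real_derivative u' r) (at r within {0..})"
    and u'_deriv_within: "\<And>r. r \<ge> 0 \<Longrightarrow> (u' has_real_derivative u'' r) (at r within {0..})"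
    and u'_0: "u' 0 = 0"
    and u_nonneg: "\<And>r. r \<ge> 0 \<Longrightarrow> u r \<ge> 0"
    and u_nontrivial: "\<exists>r\<ge>0. u r \<noteq> 0"
    and ode: "\<And>r. r > 0 \<Longrightarrow> - u'' r = \<bar>u r\<bar> powr (p - 1) * u r + M * \<bar>u' r\<bar> powr (2*p/(p+1))"
begin

lemma u_deriv: "r > 0 \<Longrightarrow> (u has_real_derivative u' r) (at r)"
  using DERIV_subset[OF u_deriv_within, of r "{0<..}"] at_within_open[of r "{0<..}"] by force

lemma u'_deriv: "r > 0 \<Longrightarrow> (u' has_real_derivative u'' r) (at r)"
  using DERIV_subset[OF u'_deriv_within, of r "{0<..}"] at_within_open[of r "{0<..}"] by force

lemma continuous_on_u: "continuous_on {0..} u"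
  unfolding continuous_on_eq_continuous_within using DERIV_continuous[OF u_deriv_within] by auto

lemma continuous_on_u': "continuous_on {0..} u'"
  unfolding continuous_on_eq_continuous_within using DERIV_continuous[OF u'_deriv_within] by auto

lemma u''_eq: "r > 0 \<Longrightarrow> u'' r = - (u r powr p + M * \<bar>u' r\<bar> powr (2*p/(p+1)))"
  using ode[of r] u_nonneg[of r] p_gt_1
  by (cases "u r = 0") (auto simp: powr_diff)

text \<open>Near a double zero the energy \<open>u\<^sup>2 + u'\<^sup>2\<close> satisfies a linear differential inequality,
  because both nonlinear terms are superlinear for \<open>p > 1\<close>.\<close>

lemma energy_deriv_bound:
  assumes "t > 0" "(u t)\<^sup>2 + (u' t)\<^sup>2 \<le> 1"
  shows "\<bar>2 * u t * u' t + 2 * u' t * u'' t\<bar> \<le> (2 + 2 * \<bar>M\<bar>) * ((u t)\<^sup>2 + (u' t)\<^sup>2)"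
proof -
  define x y where "x = u t" and "y = u' t"
  have "x \<ge> 0" unfolding x_def using u_nonneg assms(1) by simp
  have "x\<^sup>2 \<le> 1" "y\<^sup>2 \<le> 1" using assms(2) unfolding x_def y_def by (smt (verit) zero_le_power2)+
  then have "x \<le> 1" "\<bar>y\<bar> \<le> 1" using \<open>x \<ge> 0\<close> by (simp_all add: abs_square_le_1)
  have "x powr p \<le> x" using powr_mono'[of 1 p x] \<open>x \<ge> 0\<close> \<open>x \<le> 1\<close> p_gt_1 by simp
  moreover have "\<bar>y\<bar> powr (2*p/(p+1)) \<le> \<bar>y\<bar>"
    using powr_mono'[of 1 "2*p/(p+1)" "\<bar>y\<bar>"] \<open>\<bar>y\<bar> \<le> 1\<close> p_gt_1 by (simp add: field_simps)
  ultimately have "x powr p + \<bar>M\<bar> * \<bar>y\<bar> powr (2*p/(p+1)) \<le> x + \<bar>M\<bar> * \<bar>y\<bar>"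
    by (intro add_mono mult_left_mono) auto
  moreover have "\<bar>u'' t\<bar> \<le> x powr p + \<bar>M\<bar> * \<bar>y\<bar> powr (2*p/(p+1))"
    using u''_eq[OF assms(1)] abs_triangle_ineq[of "x powr p" "M * \<bar>y\<bar> powr (2*p/(p+1))"]
    unfolding x_def[symmetric] y_def[symmetric] by (simp add: abs_mult)
  ultimately have "\<bar>u'' t\<bar> \<le> x + \<bar>M\<bar> * \<bar>y\<bar>" by linarith
  then have "\<bar>2 * y * u'' t\<bar> \<le> 2 * \<bar>y\<bar> * (x + \<bar>M\<bar> * \<bar>y\<bar>)"
    by (simp add: abs_mult mult_left_mono)
  also have "\<dots> = 2 * x * \<bar>y\<bar> + 2 * \<bar>M\<bar> * y\<^sup>2"
    by (simp add: power2_eq_square algebra_simps)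
  finally have "\<bar>2 * y * u'' t\<bar> \<le> 2 * x * \<bar>y\<bar> + 2 * \<bar>M\<bar> * y\<^sup>2" .
  moreover have "2 * x * \<bar>y\<bar> \<le> x\<^sup>2 + y\<^sup>2"
    using zero_le_power2[of "x - \<bar>y\<bar>"] by (simp add: power2_diff)
  moreover have "2 * \<bar>M\<bar> * y\<^sup>2 \<le> 2 * \<bar>M\<bar> * (x\<^sup>2 + y\<^sup>2)" by (intro mult_left_mono) auto
  ultimately have "\<bar>2 * x * y\<bar> + \<bar>2 * y * u'' t\<bar> \<le> 2 * (x\<^sup>2 + y\<^sup>2) + 2 * \<bar>M\<bar> * (x\<^sup>2 + y\<^sup>2)"
    using \<open>x \<ge> 0\<close> by (simp add: abs_mult)
  then have "\<bar>2 * x * y + 2 * y * u'' t\<bar> \<le> (2 + 2 * \<bar>M\<bar>) * (x\<^sup>2 + y\<^sup>2)"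
    using abs_triangle_ineq[of "2 * x * y" "2 * y * u'' t"] by (simp add: algebra_simps)
  then show ?thesis unfolding x_def y_def .
qed

lemma vanishes_near_double_zero:
  assumes "r0 \<ge> 0" "u r0 = 0" "u' r0 = 0"
  obtains e where "e > 0" "\<And>t. t \<ge> 0 \<Longrightarrow> \<bar>t - r0\<bar> \<le> e \<Longrightarrow> u t = 0"
proof -
  define E where "E t = (u t)\<^sup>2 + (u' t)\<^sup>2" for t
  define E' where "E' t = 2 * u t * u' t + 2 * u' t * u'' t" for t
  define C where "C = 2 + 2 * \<bar>M\<bar>"
  have cont: "continuous_on {0..} E"
    unfolding E_def using continuous_on_u continuous_on_u' by (intro continuous_intros)
  have deriv: "(E has_real_derivative E' t) (at t)" if "t > 0" for t
    unfolding E_def E'_def by (auto intro!: derivative_eq_intros u_deriv u'_deriv that)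
  have "E r0 = 0" unfolding E_def using assms by simp
  have E_nonneg: "E t \<ge> 0" for t unfolding E_def by simp
  obtain d where "d > 0" and d: "\<And>t. t \<in> {0..} \<Longrightarrow> dist t r0 < d \<Longrightarrow> dist (E t) (E r0) < 1"
    using cont assms(1) unfolding continuous_on_iff by (metis atLeast_iff zero_less_one)
  have bound: "\<bar>E' t\<bar> \<le> C * E t" if "t > 0" "\<bar>t - r0\<bar> < d" for t
  proof -
    have "E t \<le> 1" using d[of t] that \<open>E r0 = 0\<close> by (simp add: dist_real_def)
    then show ?thesis unfolding E_def E'_def C_def using energy_deriv_bound that(1) by simp
  qed
  have "E t = 0" if "t \<ge> 0" "\<bar>t - r0\<bar> \<le> d/2" for t
  proof (cases "r0 \<le> t")
    case True
    show ?thesis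
    proof (rule gronwall_zero_forward[OF True _ _ deriv])
      show "continuous_on {r0..t} E" using assms(1) by (intro continuous_on_subset[OF cont]) auto
      show "E' s \<le> C * E s" if "r0 < s" "s < t" for s
        using bound[of s] that True \<open>\<bar>t - r0\<bar> \<le> d/2\<close> \<open>d > 0\<close> assms(1) by simp
    qed (use \<open>E r0 = 0\<close> E_nonneg assms(1) in \<open>auto simp: C_def\<close>)
  next
    case False
    show ?thesis
    proof (rule gronwall_zero_backward[of t r0 _ E, OF _ _ _ deriv])
      show "continuous_on {t..r0} E" using that(1) by (intro continuous_on_subset[OF cont]) auto
      show "- E' s \<le> C * E s" if "t < s" "s < r0" for s
        using bound[of s] that False \<open>\<bar>t - r0\<bar> \<le> d/2\<close> \<open>d > 0\<close> \<open>t \<ge> 0\<close> by simp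
    qed (use \<open>E r0 = 0\<close> E_nonneg False that(1) in \<open>auto simp: C_def\<close>)
  qed
  then show ?thesis using that[of "d/2"] \<open>d > 0\<close> unfolding E_def by simp
qed

lemma u'_eq_0_at_zero:
  assumes "r0 \<ge> 0" "u r0 = 0"
  shows "u' r0 = 0"
proof (cases "r0 = 0")
  case False
  then have "r0 > 0" using assms by simp
  show ?thesis
  proof (rule DERIV_local_min[OF u_deriv[OF \<open>r0 > 0\<close>] \<open>r0 > 0\<close>], intro allI impI)
    fix y assume "\<bar>r0 - y\<bar> < r0"
    then show "u r0 \<le> u y" using assms u_nonneg[of y] by simp
  qed
qed (use u'_0 in simp)

lemma u_0_pos: "u 0 > 0"
proof (rule ccontr)
  assume "\<not> u 0 > 0"
  then have "u 0 = 0" using u_nonneg[of 0] by simp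
  obtain r where "r \<ge> 0" "u r \<noteq> 0" using u_nontrivial by auto
  with \<open>u 0 = 0\<close> have "r > 0" "u r > 0" using u_nonneg[of r] by (auto simp: le_less)
  moreover have "continuous_on {0..r} (\<lambda>t. - u t)"
    using continuous_on_subset[OF continuous_on_u] by (auto intro!: continuous_intros)
  ultimately obtain r0 where r0: "0 \<le> r0" "r0 < r" "u r0 = 0"
    and after: "\<And>t. r0 < t \<Longrightarrow> t \<le> r \<Longrightarrow> u t > 0"
    using last_crossing[of 0 r "\<lambda>t. - u t" 0] \<open>u 0 = 0\<close> by auto
  obtain e where "e > 0" and vanish: "\<And>t. t \<ge> 0 \<Longrightarrow> \<bar>t - r0\<bar> \<le> e \<Longrightarrow> u t = 0"
    using vanishes_near_double_zero[OF r0(1,3) u'_eq_0_at_zero[OF r0(1,3)]] by blast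
  define t where "t = min r (r0 + e)"
  have "r0 < t" "t \<le> r" "\<bar>t - r0\<bar> \<le> e" unfolding t_def using r0 \<open>e > 0\<close> by auto
  then show False using after[of t] vanish[of t] r0(1) by simp
qed

lemma u_less_if_u'_neg:
  assumes "0 \<le> a" "a < b" "\<And>x. a < x \<Longrightarrow> x < b \<Longrightarrow> u' x < 0"
  shows "u b < u a"
proof (rule DERIV_neg_imp_decreasing_open[OF assms(2)])
  fix x assume "a < x" "x < b"
  then show "\<exists>y. (u has_real_derivative y) (at x) \<and> y < 0"
    using u_deriv assms by (intro exI[of _ "u' x"]) auto
qed (rule continuous_on_subset[OF continuous_on_u], use assms in auto)

lemma u'_neg_near_0: obtains d where "d > 0" "\<And>t. 0 < t \<Longrightarrow> t < d \<Longrightarrow> u' t < 0"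
proof -
  define h where "h t = \<bar>u t\<bar> powr (p - 1) * u t + M * \<bar>u' t\<bar> powr (2*p/(p+1))" for t
  have "continuous_on {0..} h"
    unfolding h_def using p_gt_1 continuous_on_u continuous_on_u'
    by (intro continuous_intros continuous_on_powr') auto
  moreover have "h 0 > 0" unfolding h_def using u_0_pos u'_0 p_gt_1 by simp
  ultimately obtain d where "d > 0" and d: "\<And>t. t \<in> {0..} \<Longrightarrow> dist t 0 < d \<Longrightarrow> dist (h t) (h 0) < h 0"
    unfolding continuous_on_iff by (metis atLeast_iff order_refl)
  have "u'' t < 0" if "0 < t" "t < d" for t
    using d[of t] that ode[of t] unfolding h_def by (simp add: dist_real_def)
  then have "u' t < u' 0" if "0 < t" "t < d" for t
    using that
    by (intro DERIV_neg_imp_decreasing_open[OF that(1)] continuous_on_subset[OF continuous_on_u'])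
      (auto intro!: exI u'_deriv)
  then show ?thesis using that[OF \<open>d > 0\<close>] u'_0 by simp
qed

lemma u'_neg: "r > 0 \<Longrightarrow> u' r < 0"
proof (rule ccontr)
  assume "r > 0" "\<not> u' r < 0"
  obtain d where "d > 0" and near_0: "\<And>t. 0 < t \<Longrightarrow> t < d \<Longrightarrow> u' t < 0"
    using u'_neg_near_0 by blast
  define a where "a = min d r / 2"
  have "0 < a" "a < d" "a < r" unfolding a_def using \<open>d > 0\<close> \<open>r > 0\<close> by auto
  have "continuous_on {a..r} u'"
    by (rule continuous_on_subset[OF continuous_on_u']) (use \<open>0 < a\<close> in auto)
  moreover have "u' a < 0" "0 \<le> u' r" using near_0[of a] \<open>0 < a\<close> \<open>a < d\<close> \<open>\<not> u' r < 0\<close> by auto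
  ultimately obtain r1 where "a < r1" "r1 \<le> r" "u' r1 = 0"
    and below: "\<And>t. a \<le> t \<Longrightarrow> t < r1 \<Longrightarrow> u' t < 0"
    using first_crossing[OF less_imp_le[OF \<open>a < r\<close>]] by blast
  have "r1 > 0" using \<open>0 < a\<close> \<open>a < r1\<close> by simp
  have neg: "u' t < 0" if "0 < t" "t < r1" for t
    using near_0[of t] below[of t] that \<open>a < d\<close> by (cases "t < a") auto
  show False
  proof (cases "u r1 = 0")
    case False
    then have "u'' r1 < 0" using u''_eq[OF \<open>r1 > 0\<close>] \<open>u' r1 = 0\<close> u_nonneg[of r1] \<open>r1 > 0\<close> by simp
    then obtain e where "e > 0" and e: "\<And>h. h > 0 \<Longrightarrow> h < e \<Longrightarrow> u' r1 < u' (r1 - h)"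
      using DERIV_neg_dec_left[OF u'_deriv[OF \<open>r1 > 0\<close>]] by blast
    define h where "h = min e r1 / 2"
    have "0 < h" "h < e" "h < r1" unfolding h_def using \<open>e > 0\<close> \<open>r1 > 0\<close> by auto
    then show False using e[of h] neg[of "r1 - h"] \<open>u' r1 = 0\<close> by simp
  next
    case True
    obtain e where "e > 0" and vanish: "\<And>t. t \<ge> 0 \<Longrightarrow> \<bar>t - r1\<bar> \<le> e \<Longrightarrow> u t = 0"
      using vanishes_near_double_zero[of r1] True \<open>u' r1 = 0\<close> \<open>r1 > 0\<close> by auto
    define t where "t = max 0 (r1 - e)"
    have "0 \<le> t" "t < r1" "\<bar>t - r1\<bar> \<le> e" unfolding t_def using \<open>e > 0\<close> \<open>r1 > 0\<close> by auto
    then have "u r1 < u t" using neg by (intro u_less_if_u'_neg) auto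
    then show False using vanish[of t] True \<open>0 \<le> t\<close> \<open>\<bar>t - r1\<bar> \<le> e\<close> by simp
  qed
qed

lemma u_strict_decreasing: "0 \<le> a \<Longrightarrow> a < b \<Longrightarrow> u b < u a"
  using u_less_if_u'_neg u'_neg by auto

lemma u_pos: "r \<ge> 0 \<Longrightarrow> u r > 0"
  using u_strict_decreasing[of r "r + 1"] u_nonneg[of "r + 1"] by simp

definition sfun :: "real \<Rightarrow> real" where
  "sfun r = (u' r)\<^sup>2 / (2 * u r powr (p + 1))"

lemma sfun_nonneg: "r \<ge> 0 \<Longrightarrow> sfun r \<ge> 0"
  unfolding sfun_def using u_pos[of r] by simp

lemma sfun_pos: "r > 0 \<Longrightarrow> sfun r > 0"
  unfolding sfun_def using u_pos[of r] u'_neg[of r] by simp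

lemma sfun_0: "sfun 0 = 0"
  unfolding sfun_def using u'_0 by simp

lemma continuous_on_sfun: "continuous_on {0..} sfun"
  unfolding sfun_def[abs_def] using continuous_on_u continuous_on_u' u_pos
  by (intro continuous_intros) (auto simp: less_imp_neq[symmetric])

lemma u'_square: "r \<ge> 0 \<Longrightarrow> (u' r)\<^sup>2 = 2 * sfun r * u r powr (p + 1)"
  unfolding sfun_def using u_pos[of r] by simp

lemma abs_u'_powr: "r \<ge> 0 \<Longrightarrow> \<bar>u' r\<bar> powr (2*p/(p+1)) = (2 * sfun r) powr (p/(p+1)) * u r powr p"
proof -
  assume "r \<ge> 0"
  have "2 * (p/(p+1)) = 2*p/(p+1)" by simp
  then have "\<bar>u' r\<bar> powr (2*p/(p+1)) = (\<bar>u' r\<bar> powr 2) powr (p/(p+1))"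
    by (simp only: powr_powr)
  also have "\<bar>u' r\<bar> powr 2 = (u' r)\<^sup>2"
    by (cases "u' r = 0") (simp_all add: powr_numeral)
  also have "\<dots> = 2 * sfun r * u r powr (p + 1)" using u'_square[OF \<open>r \<ge> 0\<close>] .
  also have "(2 * sfun r * u r powr (p + 1)) powr (p/(p+1))
      = (2 * sfun r) powr (p/(p+1)) * (u r powr (p + 1)) powr (p/(p+1))"
    using sfun_nonneg[OF \<open>r \<ge> 0\<close>] u_pos[OF \<open>r \<ge> 0\<close>] by (simp add: powr_mult)
  also have "(u r powr (p + 1)) powr (p/(p+1)) = u r powr p"
    using p_gt_1 by (simp add: powr_powr)
  finally show ?thesis .
qed

lemma sfun_deriv: "r > 0 \<Longrightarrow> (sfun has_real_derivative (u' r / u r) * phase_g p M (sfun r)) (at r)"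
proof -
  assume "r > 0"
  have "u r > 0" using u_pos \<open>r > 0\<close> by simp
  define P G where "P = u r powr p" and "G = (2 * sfun r) powr (p/(p+1))"
  have "P > 0" unfolding P_def using \<open>u r > 0\<close> by simp
  have up1: "u r powr (p + 1) = P * u r" unfolding P_def using \<open>u r > 0\<close> by (simp add: powr_add)
  have u'': "u'' r = - (P + M * (G * P))"
    using u''_eq[OF \<open>r > 0\<close>] abs_u'_powr[of r] \<open>r > 0\<close> unfolding P_def G_def by simp
  have sfun_r: "sfun r = (u' r)\<^sup>2 / (2 * (P * u r))" unfolding sfun_def up1 ..
  have "((\<lambda>r. (u' r)\<^sup>2) has_real_derivative 2 * u' r * u'' r) (at r)"
    using u'_deriv[OF \<open>r > 0\<close>] by (auto intro!: derivative_eq_intros)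
  moreover have "((\<lambda>r. 2 * u r powr (p + 1)) has_real_derivative 2 * ((p + 1) * u r powr p * u' r)) (at r)"
    using DERIV_cmult[OF DERIV_fun_powr[OF u_deriv[OF \<open>r > 0\<close>] \<open>u r > 0\<close>, of "p + 1"], of 2] by simp
  ultimately have "(sfun has_real_derivative
      ((2 * u' r * u'' r) * (2 * u r powr (p + 1)) - (u' r)\<^sup>2 * (2 * ((p + 1) * u r powr p * u' r)))
      / ((2 * u r powr (p + 1)) * (2 * u r powr (p + 1)))) (at r)"
    unfolding sfun_def[abs_def] using \<open>u r > 0\<close> by (intro DERIV_divide) auto
  moreover have "((2 * u' r * u'' r) * (2 * u r powr (p + 1)) - (u' r)\<^sup>2 * (2 * ((p + 1) * u r powr p * u' r)))
      / ((2 * u r powr (p + 1)) * (2 * u r powr (p + 1))) = (u' r / u r) * phase_g p M (sfun r)"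
    unfolding phase_g_def G_def[symmetric] unfolding u'' up1 P_def[symmetric] sfun_r
    using \<open>P > 0\<close> \<open>u r > 0\<close> by (simp add: field_simps power2_eq_square)
  ultimately show ?thesis by simp
qed

lemma u'_not_bounded_away_from_0:
  assumes "r1 > 0" "c > 0" "\<And>r. r \<ge> r1 \<Longrightarrow> u' r \<le> - c"
  shows False
proof -
  define B where "B = r1 + u r1 / c + 1"
  have "u r1 / c > 0" using u_pos[of r1] assms by simp
  then have "r1 < B" unfolding B_def by simp
  have "u B + c * B \<le> u r1 + c * r1"
  proof (rule DERIV_nonpos_imp_decreasing_open[OF less_imp_le[OF \<open>r1 < B\<close>]])
    fix x assume "r1 < x" "x < B"
    then have "((\<lambda>r. u r + c * r) has_real_derivative u' x + c) (at x)" "u' x + c \<le> 0"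
      using u_deriv[of x] assms(1) assms(3)[of x] by (auto intro!: derivative_eq_intros)
    then show "\<exists>y. ((\<lambda>r. u r + c * r) has_real_derivative y) (at x) \<and> y \<le> 0" by blast
  qed (use continuous_on_subset[OF continuous_on_u, of "{r1..B}"] assms in \<open>auto intro!: continuous_intros\<close>)
  moreover have "c * (B - r1) = u r1 + c" unfolding B_def using assms by (simp add: field_simps)
  ultimately have "u B \<le> - c" by (simp add: algebra_simps)
  then show False using u_pos[of B] \<open>r1 < B\<close> assms by simp
qed

lemma sfun_mono:
  assumes "0 \<le> a" "a \<le> b" "\<And>r. a < r \<Longrightarrow> r < b \<Longrightarrow> phase_g p M (sfun r) \<le> 0"
  shows "sfun a \<le> sfun b"
proof (rule DERIV_nonneg_imp_increasing_open[OF assms(2)])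
  fix x assume x: "a < x" "x < b"
  then have "x > 0" using assms by simp
  have "u' x / u x * phase_g p M (sfun x) \<ge> 0"
    using u'_neg[OF \<open>x > 0\<close>] u_pos[of x] \<open>x > 0\<close> assms(3)[OF x]
    by (intro mult_nonpos_nonpos) (auto simp: divide_nonpos_pos)
  then show "\<exists>y. (sfun has_real_derivative y) (at x) \<and> 0 \<le> y" using sfun_deriv[OF \<open>x > 0\<close>] by blast
qed (rule continuous_on_subset[OF continuous_on_sfun], use assms in auto)

lemma sfun_plus_log_u_mono:
  assumes "\<And>r. r > 0 \<Longrightarrow> phase_g p M (sfun r) \<le> - \<delta>" "0 < a" "a \<le> b"
  shows "sfun a + \<delta> * ln (u a) \<le> sfun b + \<delta> * ln (u b)"
proof (rule DERIV_nonneg_imp_increasing_open[OF assms(3)])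
  fix x :: real assume "a < x" "x < b"
  then have "x > 0" using assms(2) by simp
  have "((\<lambda>r. sfun r + \<delta> * ln (u r)) has_real_derivative (u' x / u x) * (phase_g p M (sfun x) + \<delta>)) (at x)"
    using sfun_deriv[OF \<open>x > 0\<close>] u_deriv[OF \<open>x > 0\<close>] u_pos[of x] \<open>x > 0\<close>
    by (auto intro!: derivative_eq_intros simp: field_simps)
  moreover have "(u' x / u x) * (phase_g p M (sfun x) + \<delta>) \<ge> 0"
    using u'_neg[OF \<open>x > 0\<close>] u_pos[of x] \<open>x > 0\<close> assms(1)[OF \<open>x > 0\<close>]
    by (intro mult_nonpos_nonpos) (auto simp: divide_nonpos_pos)
  ultimately show "\<exists>y. ((\<lambda>r. sfun r + \<delta> * ln (u r)) has_real_derivative y) (at x) \<and> 0 \<le> y" by blast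
next
  have "isCont (\<lambda>r. sfun r + \<delta> * ln (u r)) x" if "x > 0" for x
    using DERIV_isCont[OF sfun_deriv, of x] DERIV_isCont[OF u_deriv, of x] u_pos[of x] that
    by (auto intro!: continuous_intros)
  then show "continuous_on {a..b} (\<lambda>r. sfun r + \<delta> * ln (u r))"
    using assms(2) by (intro continuous_at_imp_continuous_on) auto
qed

text \<open>By the monotonicity above, \<open>u\<close> stays away from 0 if \<open>sfun\<close> is bounded; as \<open>sfun\<close> is
  nondecreasing, this forces \<open>u' \<le> -c\<close>.\<close>

lemma phase_g_not_uniformly_neg:
  assumes "\<delta> > 0" "\<And>r. r > 0 \<Longrightarrow> phase_g p M (sfun r) \<le> - \<delta>" "\<And>r. r > 0 \<Longrightarrow> sfun r \<le> S"
  shows False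
proof -
  define F where "F r = sfun r + \<delta> * ln (u r)" for r
  have F_mono: "F 1 \<le> F r" if "r \<ge> 1" for r
    unfolding F_def using sfun_plus_log_u_mono[OF assms(2)] that by simp
  define L where "L = exp ((F 1 - S) / \<delta>)"
  have u_ge_L: "u r \<ge> L" if "r \<ge> 1" for r
  proof -
    have "\<delta> * ln (u r) \<ge> F 1 - S" using F_mono[OF that] assms(3)[of r] that unfolding F_def by simp
    then have "(F 1 - S) / \<delta> \<le> ln (u r)" using assms(1) by (simp add: field_simps)
    then have "exp ((F 1 - S) / \<delta>) \<le> exp (ln (u r))" by simp
    then show ?thesis unfolding L_def using u_pos[of r] that by simp
  qed
  define c where "c = 2 * sfun 1 * L powr (p + 1)"
  have "c > 0" unfolding c_def L_def using sfun_pos[of 1] by simp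
  have "u' r \<le> - sqrt c" if "r \<ge> 1" for r
  proof -
    have "sfun 1 \<le> sfun r"
      using that assms(1,2) by (intro sfun_mono) (auto intro: order_trans[of _ "- \<delta>"])
    moreover have "L powr (p + 1) \<le> u r powr (p + 1)"
      using u_ge_L[OF that] p_gt_1 by (intro powr_mono2) (auto simp: L_def)
    ultimately have "c \<le> 2 * sfun r * u r powr (p + 1)"
      unfolding c_def using sfun_pos[of 1] by (intro mult_mono mult_left_mono) (auto simp: L_def)
    then have "c \<le> (u' r)\<^sup>2" using u'_square[of r] that by simp
    then have "sqrt c \<le> sqrt ((u' r)\<^sup>2)" by (rule real_sqrt_le_mono)
    then show ?thesis using u'_neg[of r] that by simp
  qed
  then show False using u'_not_bounded_away_from_0[of 1 "sqrt c"] \<open>c > 0\<close> by simp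
qed

lemma kinetic_powr_deriv_lower:
  assumes "r > 0" "- M * 2 powr (p/(p+1)) / (p+1) \<le> \<kappa>"
  obtains y' where "((\<lambda>r. ((u' r)\<^sup>2/2) powr (1/(p+1))) has_real_derivative y') (at r)" "y' \<ge> \<kappa> * u' r"
proof -
  define z where "z = (u' r)\<^sup>2/2"
  have "z > 0" unfolding z_def using u'_neg[OF assms(1)] by simp
  define Z where "Z = z powr (1/(p+1) - 1)"
  have "Z > 0" unfolding Z_def using \<open>z > 0\<close> by simp
  have "((\<lambda>r. ((u' r)\<^sup>2/2) powr (1/(p+1))) has_real_derivative (1/(p+1)) * Z * (u' r * u'' r)) (at r)"
    using DERIV_fun_powr[of "\<lambda>r. (u' r)\<^sup>2/2", of "u' r * u'' r" r "1/(p+1)"] u'_deriv[OF assms(1)] \<open>z > 0\<close>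
    unfolding Z_def z_def by (auto intro!: derivative_eq_intros)
  moreover have "(1/(p+1)) * Z * (u' r * u'' r) \<ge> \<kappa> * u' r"
  proof -
    have "2 * (p/(p+1)) = 2*p/(p+1)" by simp
    then have "\<bar>u' r\<bar> powr (2*p/(p+1)) = (\<bar>u' r\<bar> powr 2) powr (p/(p+1))" by (simp only: powr_powr)
    also have "\<bar>u' r\<bar> powr 2 = 2 * z" unfolding z_def using u'_neg[OF assms(1)] by (simp add: powr_numeral)
    finally have "\<bar>u' r\<bar> powr (2*p/(p+1)) = 2 powr (p/(p+1)) * z powr (p/(p+1))"
      using \<open>z > 0\<close> by (simp add: powr_mult)
    then have u'': "u'' r = - (u r powr p + M * (2 powr (p/(p+1)) * z powr (p/(p+1))))"
      using u''_eq[OF assms(1)] by simp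
    have "Z * z powr (p/(p+1)) = 1"
    proof -
      have "1/(p+1) - 1 + p/(p+1) = 0" using p_gt_1 by (simp add: field_simps)
      then show ?thesis unfolding Z_def using \<open>z > 0\<close> by (simp flip: powr_add)
    qed
    moreover have "(1/(p+1)) * Z * (u' r * u'' r) = - (1/(p+1)) * Z * u r powr p * u' r
        + (- M * 2 powr (p/(p+1)) / (p+1)) * (Z * z powr (p/(p+1))) * u' r"
      unfolding u'' by (simp add: algebra_simps)
    ultimately have "(1/(p+1)) * Z * (u' r * u'' r)
        = - (1/(p+1)) * Z * u r powr p * u' r + (- M * 2 powr (p/(p+1)) / (p+1)) * u' r"
      by simp
    moreover have "- (1/(p+1)) * Z * u r powr p * u' r \<ge> 0"
      using \<open>Z > 0\<close> u'_neg[OF assms(1)] p_gt_1 by (intro mult_nonpos_nonpos) (auto simp: mult_nonneg_nonneg)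
    moreover have "(- M * 2 powr (p/(p+1)) / (p+1)) * u' r \<ge> \<kappa> * u' r"
      using assms(2) u'_neg[OF assms(1)] by (intro mult_right_mono_neg) auto
    ultimately show ?thesis by linarith
  qed
  ultimately show ?thesis by (rule that)
qed

lemma kinetic_powr_minus_u_mono:
  assumes "- M * 2 powr (p/(p+1)) / (p+1) \<le> \<kappa>" "0 < r" "r \<le> t"
  shows "((u' r)\<^sup>2/2) powr (1/(p+1)) - \<kappa> * u r \<le> ((u' t)\<^sup>2/2) powr (1/(p+1)) - \<kappa> * u t"
proof (rule DERIV_nonneg_imp_increasing_open[OF assms(3)])
  fix x assume "r < x" "x < t"
  then have "x > 0" using assms(2) by simp
  then obtain y' where y': "((\<lambda>r. ((u' r)\<^sup>2/2) powr (1/(p+1))) has_real_derivative y') (at x)"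
    and "y' \<ge> \<kappa> * u' x"
    using kinetic_powr_deriv_lower[OF _ assms(1)] by blast
  then show "\<exists>d. ((\<lambda>r. ((u' r)\<^sup>2/2) powr (1/(p+1)) - \<kappa> * u r) has_real_derivative d) (at x) \<and> 0 \<le> d"
    using DERIV_diff[OF y' DERIV_cmult[OF u_deriv[OF \<open>x > 0\<close>], of \<kappa>]] by auto
next
  have "isCont (\<lambda>r. ((u' r)\<^sup>2/2) powr (1/(p+1)) - \<kappa> * u r) x" if x_pos: "x > 0" for x
  proof -
    obtain y' where "((\<lambda>r. ((u' r)\<^sup>2/2) powr (1/(p+1))) has_real_derivative y') (at x)"
      using kinetic_powr_deriv_lower[OF x_pos assms(1)] by blast
    then show ?thesis using u_deriv[OF x_pos] by (auto intro!: continuous_intros simp: DERIV_isCont)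
  qed
  then show "continuous_on {r..t} (\<lambda>r. ((u' r)\<^sup>2/2) powr (1/(p+1)) - \<kappa> * u r)"
    using assms(2) by (intro continuous_at_imp_continuous_on) auto
qed

text \<open>Since \<open>((u')\<^sup>2/2)\<^bsup>1/(p+1)\<^esup> = sfun\<^bsup>1/(p+1)\<^esup> u\<close>, if \<open>sfun\<close> ever exceeded \<open>\<kappa>\<^bsup>p+1\<^esup>\<close>, the
  monotonicity above would keep \<open>|u'|\<close> away from 0.\<close>

lemma sfun_bounded:
  defines "\<kappa> \<equiv> max 0 (- M * 2 powr (p/(p+1)) / (p+1))"
  assumes "r > 0"
  shows "sfun r \<le> \<kappa> powr (p + 1)"
proof (rule ccontr)
  assume "\<not> sfun r \<le> \<kappa> powr (p + 1)"
  define y where "y r = ((u' r)\<^sup>2/2) powr (1/(p+1))" for r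
  have "y r = sfun r powr (1/(p+1)) * u r"
  proof -
    have "y r = (sfun r * u r powr (p + 1)) powr (1/(p+1))"
      unfolding y_def using u'_square[of r] assms(2) by simp
    also have "\<dots> = sfun r powr (1/(p+1)) * u r"
      using sfun_pos[OF assms(2)] u_pos[of r] assms(2) p_gt_1 by (simp add: powr_mult powr_powr)
    finally show ?thesis .
  qed
  have "\<kappa> \<ge> 0" unfolding \<kappa>_def by simp
  then have "\<kappa> = (\<kappa> powr (p + 1)) powr (1/(p+1))"
    using p_gt_1 by (cases "\<kappa> = 0") (simp_all add: powr_powr)
  also have "\<dots> < sfun r powr (1/(p+1))"
    using \<open>\<not> sfun r \<le> \<kappa> powr (p + 1)\<close> p_gt_1 by (intro powr_less_mono2) auto
  finally have "\<kappa> < sfun r powr (1/(p+1))" .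
  define c where "c = y r - \<kappa> * u r"
  have "c = u r * (sfun r powr (1/(p+1)) - \<kappa>)"
    unfolding c_def \<open>y r = sfun r powr (1/(p+1)) * u r\<close> by (simp add: algebra_simps)
  then have "c > 0" using \<open>\<kappa> < sfun r powr (1/(p+1))\<close> u_pos[of r] assms(2) by simp
  have "u' t \<le> - sqrt (2 * c powr (p + 1))" if "t \<ge> r" for t
  proof -
    have "y t - \<kappa> * u t \<ge> c"
      using kinetic_powr_minus_u_mono[of \<kappa> r t] assms(2) that unfolding c_def y_def \<kappa>_def by simp
    then have "y t \<ge> c" using \<open>\<kappa> \<ge> 0\<close> u_pos[of t] that assms(2)
      by (smt (verit) mult_nonneg_nonneg)
    then have "c powr (p + 1) \<le> y t powr (p + 1)" using \<open>c > 0\<close> p_gt_1 by (intro powr_mono2) auto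
    also have "y t powr (p + 1) = (u' t)\<^sup>2/2" unfolding y_def using p_gt_1 by (simp add: powr_powr)
    finally have "sqrt (2 * c powr (p + 1)) \<le> sqrt ((u' t)\<^sup>2)" by (intro real_sqrt_le_mono) simp
    then show ?thesis using u'_neg[of t] that assms(2) by simp
  qed
  then show False
    using u'_not_bounded_away_from_0[OF assms(2), of "sqrt (2 * c powr (p + 1))"] \<open>c > 0\<close> by simp
qed

lemma le_neg_mu_star1: "M \<le> - mu_star1 p"
proof (rule ccontr)
  assume "\<not> M \<le> - mu_star1 p"
  then obtain \<delta> where "\<delta> > 0" "\<And>s. s \<ge> 0 \<Longrightarrow> phase_g p M s \<le> - \<delta>"
    using phase_g_uniformly_neg[OF p_gt_1] by (metis not_le)
  then show False
    using phase_g_not_uniformly_neg[OF \<open>\<delta> > 0\<close>] sfun_bounded sfun_nonneg by (meson less_imp_le)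
qed

text \<open>Below \<open>g_zero1\<close> the chord bound \<open>phase_g s \<ge> s/g_zero1 - 1\<close> makes \<open>g_zero1 - sfun\<close> decay at most
  exponentially, so \<open>sfun\<close> cannot reach \<open>g_zero1\<close> in finite time.\<close>

lemma sfun_less_g_zero1:
  assumes "r \<ge> 0"
  shows "sfun r < g_zero1 p M"
proof (rule ccontr)
  note M = le_neg_mu_star1
  define S where "S = g_zero1 p M"
  have "S > 0" unfolding S_def by (rule g_zero1_pos[OF p_gt_1 M])
  assume "\<not> sfun r < g_zero1 p M"
  then have "sfun 0 < S" "S \<le> sfun r" unfolding S_def using sfun_0 \<open>S > 0\<close> S_def by auto
  then obtain rs where "0 < rs" "rs \<le> r" "sfun rs = S" and below: "\<And>t. 0 \<le> t \<Longrightarrow> t < rs \<Longrightarrow> sfun t < S"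
    using first_crossing[OF assms continuous_on_subset[OF continuous_on_sfun]] by auto
  define h where "h t = \<bar>u' t\<bar> / u t" for t
  have "continuous_on {0..rs} h"
    unfolding h_def using continuous_on_subset[OF continuous_on_u] continuous_on_subset[OF continuous_on_u'] u_pos
    by (intro continuous_intros) (auto simp: less_imp_neq[symmetric])
  then obtain x0 where "x0 \<in> {0..rs}" and h_max: "\<And>t. t \<in> {0..rs} \<Longrightarrow> h t \<le> h x0"
    using continuous_attains_sup[OF compact_Icc] \<open>0 < rs\<close> by (metis atLeastAtMost_iff empty_iff less_imp_le order_refl)
  define B where "B = h x0 / S"
  have "B \<ge> 0" unfolding B_def h_def using \<open>S > 0\<close> u_pos[of x0] \<open>x0 \<in> {0..rs}\<close> by simp
  define \<phi> where "\<phi> t = (S - sfun t) * exp (B * t)" for t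
  have "\<phi> 0 \<le> \<phi> rs"
  proof (rule DERIV_nonneg_imp_increasing_open[OF less_imp_le[OF \<open>0 < rs\<close>]])
    fix x assume x: "0 < x" "x < rs"
    have deriv: "(\<phi> has_real_derivative (B * (S - sfun x) - (u' x / u x) * phase_g p M (sfun x)) * exp (B * x)) (at x)"
      unfolding \<phi>_def using sfun_deriv[OF x(1)] by (auto intro!: derivative_eq_intros simp: algebra_simps)
    have "0 \<le> sfun x" "sfun x < S" using below[of x] x sfun_nonneg[of x] by auto
    then have "phase_g p M (sfun x) \<ge> sfun x / S - 1"
      unfolding S_def using phase_g_ge_chord_g_zero1[OF p_gt_1 M] by simp
    have "h x \<ge> 0" unfolding h_def using u_pos[of x] x by simp
    have "(u' x / u x) * phase_g p M (sfun x) = h x * (- phase_g p M (sfun x))"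
      unfolding h_def using u'_neg[OF x(1)] by simp
    also have "\<dots> \<le> h x * ((S - sfun x) / S)"
      using \<open>phase_g p M (sfun x) \<ge> sfun x / S - 1\<close> \<open>S > 0\<close> \<open>h x \<ge> 0\<close>
      by (intro mult_left_mono) (auto simp: field_simps)
    also have "\<dots> \<le> h x0 * ((S - sfun x) / S)"
      using h_max[of x] x \<open>sfun x < S\<close> \<open>S > 0\<close> by (intro mult_right_mono) auto
    also have "\<dots> = B * (S - sfun x)" unfolding B_def by simp
    finally have "(u' x / u x) * phase_g p M (sfun x) \<le> B * (S - sfun x)" .
    then show "\<exists>y. (\<phi> has_real_derivative y) (at x) \<and> 0 \<le> y" using deriv by fastforce
  qed (use continuous_on_subset[OF continuous_on_sfun, of "{0..rs}"] in
      \<open>auto simp: \<phi>_def intro!: continuous_intros\<close>)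
  then show False unfolding \<phi>_def using \<open>sfun rs = S\<close> sfun_0 \<open>S > 0\<close> by simp
qed

lemma sfun_tendsto: "(sfun \<longlongrightarrow> g_zero1 p M) at_top"
proof (rule order_tendstoI)
  fix b assume "b > g_zero1 p M"
  then show "\<forall>\<^sub>F r in at_top. sfun r < b"
    using sfun_less_g_zero1 by (intro eventually_at_top_linorderI[of 0]) (auto intro: less_trans)
next
  note M = le_neg_mu_star1
  fix b assume "b < g_zero1 p M"
  have phase_g_sfun_neg: "phase_g p M (sfun t) < 0" if "t \<ge> 0" for t
    using phase_g_neg_below_g_zero1[OF p_gt_1 M sfun_nonneg[OF that] sfun_less_g_zero1[OF that]] .
  show "\<forall>\<^sub>F r in at_top. b < sfun r"
  proof (cases "\<exists>r0>0. sfun r0 > b")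
    case True
    then obtain r0 where "r0 > 0" "sfun r0 > b" by auto
    then show ?thesis
      using sfun_mono[of r0] phase_g_sfun_neg
      by (intro eventually_at_top_linorderI[of r0]) (smt (verit))
  next
    case False
    then have bound: "\<And>r. r > 0 \<Longrightarrow> sfun r \<le> b" by (meson not_le)
    have "b \<ge> 0" using bound[of 1] sfun_pos[of 1] by simp
    obtain x0 where "x0 \<in> {0..b}" and max: "\<And>t. t \<in> {0..b} \<Longrightarrow> phase_g p M t \<le> phase_g p M x0"
      using continuous_attains_sup[OF compact_Icc _ continuous_on_subset[OF continuous_on_phase_g[OF p_gt_1]]]
        \<open>b \<ge> 0\<close> by (metis atLeastAtMost_iff atLeast_iff empty_iff order_refl subsetI)
    have "phase_g p M x0 < 0"
      using phase_g_neg_below_g_zero1[OF p_gt_1 M, of x0] \<open>x0 \<in> {0..b}\<close> \<open>b < g_zero1 p M\<close> by simp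
    then show ?thesis
      using phase_g_not_uniformly_neg[of "- phase_g p M x0" b] max[of "sfun _"] bound sfun_nonneg
      by (metis atLeastAtMost_iff less_imp_le neg_0_less_iff_less minus_minus)
  qed
qed

lemma decay_power_deriv:
  assumes "r > 0"
  shows "((\<lambda>r. u r powr (- (p - 1)/2)) has_real_derivative sqrt (2 * sfun r) / decay_exp p) (at r)"
proof -
  have "u r > 0" using u_pos assms by simp
  have "u' r = - (sqrt (2 * sfun r) * u r powr ((p + 1)/2))"
  proof -
    have "\<bar>u' r\<bar> = sqrt (2 * sfun r * u r powr (p + 1))"
      using u'_square[of r] assms by (metis less_imp_le real_sqrt_abs)
    also have "\<dots> = sqrt (2 * sfun r) * u r powr ((p + 1)/2)"
      using \<open>u r > 0\<close> by (simp add: real_sqrt_mult powr_half_sqrt[symmetric] powr_powr)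
    finally show ?thesis using u'_neg[OF assms] by simp
  qed
  moreover have "u r powr (- (p - 1)/2 - 1) * u r powr ((p + 1)/2) = 1"
    using \<open>u r > 0\<close> by (simp flip: powr_add add: field_simps)
  ultimately have "(- (p - 1)/2) * u r powr (- (p - 1)/2 - 1) * u' r = sqrt (2 * sfun r) / decay_exp p"
    unfolding decay_exp_def using p_gt_1 by (simp add: field_simps)
  then show ?thesis
    using DERIV_fun_powr[OF u_deriv[OF assms] \<open>u r > 0\<close>, of "- (p - 1)/2"] by simp
qed

lemma asymp_U2: "u \<sim>[at_top] U2 p M"
proof -
  note M = le_neg_mu_star1
  define a c where "a = decay_exp p" and "c = sqrt (2 * g_zero1 p M) / decay_exp p"
  have "a > 0" "c > 0" unfolding a_def c_def using decay_exp_pos[OF p_gt_1] g_zero1_pos[OF p_gt_1 M] by auto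
  have "((\<lambda>r. u r powr (- (p - 1)/2) / r) \<longlongrightarrow> c) at_top"
    unfolding c_def
  proof (rule tendsto_ratio_at_top_of_deriv)
    show "\<forall>\<^sub>F r in at_top. ((\<lambda>r. u r powr (- (p - 1)/2)) has_real_derivative
        sqrt (2 * sfun r) / decay_exp p) (at r)"
      using decay_power_deriv by (intro eventually_at_top_linorderI[of 1]) auto
  qed (use sfun_tendsto decay_exp_pos[OF p_gt_1] in \<open>auto intro!: tendsto_intros\<close>)
  moreover have "u r = (u r powr (- (p - 1)/2)) powr (- a)" if "r \<ge> 0" for r
  proof -
    have "(- (p - 1)/2) * (- a) = 1" unfolding a_def decay_exp_def using p_gt_1 by (simp add: field_simps)
    then show ?thesis using u_pos[OF that] by (simp add: powr_powr)
  qed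
  ultimately have "u \<sim>[at_top] (\<lambda>r. c powr (- a) * r powr (- a))"
    using \<open>c > 0\<close> by (intro asymp_equiv_powr_of_ratio eventually_gt_at_top eventually_at_top_linorderI[of 0]) auto
  moreover have "U2 p M = (\<lambda>r. c powr (- a) * r powr (- a))"
    unfolding U2_def X2_eq_coeff_of_g_zero1[OF p_gt_1 M] coeff_of_s_def c_def a_def decay_exp_def by auto
  ultimately show ?thesis by simp
qed

end

lemma ground_state_profile_of_ground_state:
  assumes "p > 1" "ground_state p M u"
  obtains u' u'' where "ground_state_profile p M u u' u''"
proof -
  obtain u' u'' where
    "\<forall>r\<ge>0. (u has_real_derivative u' r) (at r within {0..}) \<and> (u' has_real_derivative u'' r) (at r within {0..})"
    "u' 0 = 0" "\<forall>r\<ge>0. u r \<ge> 0" "\<exists>r\<ge>0. u r \<noteq> 0"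
    "\<forall>r>0. - u'' r = \<bar>u r\<bar> powr (p - 1) * u r + M * \<bar>u' r\<bar> powr (2 * p / (p + 1))"
    using assms(2) unfolding ground_state_def by blast
  then have "ground_state_profile p M u u' u''" using assms(1) by unfold_locales auto
  then show ?thesis by (rule that)
qed

section \<open>Construction of ground states\<close>

definition neg_log_rate :: "real \<Rightarrow> real \<Rightarrow> real \<Rightarrow> real" where
  "neg_log_rate p M t = 2 * t / (- phase_g p M (t\<^sup>2))"

definition radius_rate :: "real \<Rightarrow> real \<Rightarrow> (real \<Rightarrow> real) \<Rightarrow> real \<Rightarrow> real" where
  "radius_rate p M G t = sqrt 2 * exp ((p - 1)/2 * G t) / (- phase_g p M (t\<^sup>2))"

definition sqrt_g_zero1 :: "real \<Rightarrow> real \<Rightarrow> real" where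
  "sqrt_g_zero1 p M = sqrt (g_zero1 p M)"

text \<open>Quadrature of a ground state in the phase variable \<open>t = - u' / (sqrt 2 u\<^bsup>(p+1)/2\<^esup>)\<close>,
  so that \<open>t\<^sup>2 = sfun\<close>: as \<open>t\<close> runs through \<open>(- sqrt_g_zero1, sqrt_g_zero1)\<close>, \<open>G t = - ln u\<close> and the
  radius \<open>R t\<close> have the derivatives below. Inverting \<open>R\<close> yields the ground state, extended evenly
  to negative radii.\<close>

locale gs_quadrature =
  fixes p M :: real and G R :: "real \<Rightarrow> real"
  assumes p_gt_1: "p > 1" and M_le: "M \<le> - mu_star1 p"
    and G_deriv: "\<And>t. \<bar>t\<bar> < sqrt_g_zero1 p M \<Longrightarrow> (G has_real_derivative neg_log_rate p M t) (at t)"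
    and G_0: "G 0 = 0"
    and R_deriv: "\<And>t. \<bar>t\<bar> < sqrt_g_zero1 p M \<Longrightarrow> (R has_real_derivative radius_rate p M G t) (at t)"
    and R_0: "R 0 = 0"

lemma gs_quadrature_exists:
  assumes "p > 1" "M \<le> - mu_star1 p"
  obtains G R where "gs_quadrature p M G R"
proof -
  define \<sigma> where "\<sigma> = sqrt_g_zero1 p M"
  have "\<sigma> > 0" unfolding \<sigma>_def sqrt_g_zero1_def using g_zero1_pos[OF assms] by simp
  have neg: "phase_g p M (t\<^sup>2) < 0" if "- \<sigma> < t" "t < \<sigma>" for t
  proof -
    have "\<bar>t\<bar>\<^sup>2 < \<sigma>\<^sup>2" using that by (intro power_strict_mono) auto
    then show ?thesis unfolding \<sigma>_def sqrt_g_zero1_def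
      using phase_g_neg_below_g_zero1[OF assms, of "t\<^sup>2"] g_zero1_pos[OF assms] by simp
  qed
  obtain G where G: "\<And>t. - \<sigma> < t \<Longrightarrow> t < \<sigma> \<Longrightarrow> (G has_real_derivative neg_log_rate p M t) (at t)" "G 0 = 0"
    using antiderivative_vanishing_at[of "ereal (- \<sigma>)" 0 "ereal \<sigma>" "neg_log_rate p M"] \<open>\<sigma> > 0\<close> neg
    unfolding neg_log_rate_def by (force intro!: continuous_intros isCont_phase_g_square[OF assms(1)])
  have "isCont (radius_rate p M G) t" if "- \<sigma> < t" "t < \<sigma>" for t
    using neg[OF that] DERIV_isCont[OF G(1)[OF that]] isCont_phase_g_square[OF assms(1)]
    unfolding radius_rate_def[abs_def] by (auto intro!: continuous_intros)
  then obtain R where "\<And>t. - \<sigma> < t \<Longrightarrow> t < \<sigma> \<Longrightarrow> (R has_real_derivative radius_rate p M G t) (at t)" "R 0 = 0"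
    using antiderivative_vanishing_at[of "ereal (- \<sigma>)" 0 "ereal \<sigma>" "radius_rate p M G"] \<open>\<sigma> > 0\<close> by auto
  then have "gs_quadrature p M G R"
    using assms G unfolding \<sigma>_def by unfold_locales (auto simp: abs_less_iff)
  then show ?thesis by (rule that)
qed

context gs_quadrature
begin

abbreviation "\<sigma> \<equiv> sqrt_g_zero1 p M"

lemma \<sigma>_pos: "\<sigma> > 0"
  unfolding sqrt_g_zero1_def using g_zero1_pos[OF p_gt_1 M_le] by simp

lemma \<sigma>_square: "\<sigma>\<^sup>2 = g_zero1 p M"
  unfolding sqrt_g_zero1_def using g_zero1_pos[OF p_gt_1 M_le] by simp

lemma phase_g_square_neg: "\<bar>t\<bar> < \<sigma> \<Longrightarrow> phase_g p M (t\<^sup>2) < 0"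
  using power_strict_mono[of "\<bar>t\<bar>" \<sigma> 2] phase_g_neg_below_g_zero1[OF p_gt_1 M_le, of "t\<^sup>2"] \<sigma>_square
  by simp

lemma continuous_on_G: "- \<sigma> < a \<Longrightarrow> b < \<sigma> \<Longrightarrow> continuous_on {a..b} G"
  by (intro continuous_at_imp_continuous_on ballI DERIV_isCont[OF G_deriv]) auto

lemma continuous_on_R: "- \<sigma> < a \<Longrightarrow> b < \<sigma> \<Longrightarrow> continuous_on {a..b} R"
  by (intro continuous_at_imp_continuous_on ballI DERIV_isCont[OF R_deriv]) auto

lemma G_nonneg:
  assumes "\<bar>t\<bar> < \<sigma>"
  shows "G t \<ge> 0"
proof (cases "t \<ge> 0")
  case True
  have "G 0 \<le> G t"
  proof (rule DERIV_nonneg_imp_increasing_open[OF True])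
    fix x assume "0 < x" "x < t"
    then have "\<bar>x\<bar> < \<sigma>" using assms by simp
    moreover have "neg_log_rate p M x \<ge> 0"
      unfolding neg_log_rate_def using phase_g_square_neg[OF \<open>\<bar>x\<bar> < \<sigma>\<close>] \<open>0 < x\<close>
      by (intro divide_nonneg_pos) auto
    ultimately show "\<exists>y. (G has_real_derivative y) (at x) \<and> 0 \<le> y" using G_deriv by blast
  qed (rule continuous_on_G, use assms \<sigma>_pos in auto)
  then show ?thesis using G_0 by simp
next
  case False
  have "G 0 \<le> G t"
  proof (rule DERIV_nonpos_imp_decreasing_open[of t 0])
    fix x assume "t < x" "x < 0"
    then have "\<bar>x\<bar> < \<sigma>" using assms by simp
    moreover have "neg_log_rate p M x \<le> 0"
      unfolding neg_log_rate_def using phase_g_square_neg[OF \<open>\<bar>x\<bar> < \<sigma>\<close>] \<open>x < 0\<close>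
      by (intro divide_nonpos_pos) auto
    ultimately show "\<exists>y. (G has_real_derivative y) (at x) \<and> y \<le> 0" using G_deriv by blast
  qed (use False assms \<sigma>_pos in \<open>auto intro: continuous_on_G\<close>)
  then show ?thesis using G_0 by simp
qed

lemma radius_rate_pos: "\<bar>t\<bar> < \<sigma> \<Longrightarrow> radius_rate p M G t > 0"
  unfolding radius_rate_def using phase_g_square_neg by (intro divide_pos_pos) auto

text \<open>The chord bound for \<open>phase_g\<close> makes \<open>R\<close> grow logarithmically at \<open>\<plusminus>\<sigma>\<close>, so \<open>R\<close> is onto.\<close>

lemma radius_rate_lower: "\<bar>t\<bar> < \<sigma> \<Longrightarrow> radius_rate p M G t \<ge> (sqrt 2 * \<sigma> / 2) / (\<sigma> - \<bar>t\<bar>)"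
proof -
  assume t: "\<bar>t\<bar> < \<sigma>"
  have s1: "g_zero1 p M = \<sigma>\<^sup>2" using \<sigma>_square by simp
  have "t\<^sup>2 \<le> g_zero1 p M" using power_mono[of "\<bar>t\<bar>" \<sigma> 2] t s1 by simp
  then have "- phase_g p M (t\<^sup>2) \<le> 1 - t\<^sup>2 / \<sigma>\<^sup>2"
    using phase_g_ge_chord_g_zero1[OF p_gt_1 M_le, of "t\<^sup>2"] s1 by simp
  also have "1 - t\<^sup>2/\<sigma>\<^sup>2 = (\<sigma> - \<bar>t\<bar>) * (\<sigma> + \<bar>t\<bar>) / \<sigma>\<^sup>2"
    using \<sigma>_pos by (simp add: field_simps power2_eq_square)
  also have "\<dots> \<le> (\<sigma> - \<bar>t\<bar>) * (2 * \<sigma>) / \<sigma>\<^sup>2"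
    using t \<sigma>_pos by (intro divide_right_mono mult_left_mono) auto
  also have "\<dots> = 2 * (\<sigma> - \<bar>t\<bar>) / \<sigma>"
    using \<sigma>_pos by (simp add: power2_eq_square)
  finally have bound: "- phase_g p M (t\<^sup>2) \<le> 2 * (\<sigma> - \<bar>t\<bar>) / \<sigma>" .
  have "(sqrt 2 * \<sigma> / 2) / (\<sigma> - \<bar>t\<bar>) = sqrt 2 / (2 * (\<sigma> - \<bar>t\<bar>) / \<sigma>)"
    using \<sigma>_pos t by simp
  also have "\<dots> \<le> sqrt 2 / (- phase_g p M (t\<^sup>2))"
  proof (rule divide_left_mono[OF bound])
    have "2 * (\<sigma> - \<bar>t\<bar>) / \<sigma> > 0" using t \<sigma>_pos by simp
    then show "0 < 2 * (\<sigma> - \<bar>t\<bar>) / \<sigma> * - phase_g p M (t\<^sup>2)"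
      using phase_g_square_neg[OF t] by (intro mult_pos_pos) auto
  qed simp
  also have "\<dots> \<le> radius_rate p M G t"
    unfolding radius_rate_def using G_nonneg[OF t] p_gt_1 phase_g_square_neg[OF t]
    by (intro divide_right_mono) auto
  finally show ?thesis .
qed

lemma R_strict_mono:
  assumes "\<bar>x\<bar> < \<sigma>" "\<bar>y\<bar> < \<sigma>" "x < y"
  shows "R x < R y"
proof (rule DERIV_pos_imp_increasing_open[OF assms(3)])
  fix t assume "x < t" "t < y"
  then have "\<bar>t\<bar> < \<sigma>" using assms by auto
  then show "\<exists>d. (R has_real_derivative d) (at t) \<and> 0 < d" using R_deriv radius_rate_pos by blast
qed (rule continuous_on_R, use assms in auto)

lemma R_ge_log: "0 \<le> x \<Longrightarrow> x < \<sigma> \<Longrightarrow> R x \<ge> (sqrt 2 * \<sigma> / 2) * (ln \<sigma> - ln (\<sigma> - x))"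
proof -
  assume x: "0 \<le> x" "x < \<sigma>"
  define c where "c = sqrt 2 * \<sigma> / 2"
  have "R 0 - c * (ln \<sigma> - ln (\<sigma> - 0)) \<le> R x - c * (ln \<sigma> - ln (\<sigma> - x))"
  proof (rule DERIV_nonneg_imp_increasing_open[OF x(1)])
    fix t assume "0 < t" "t < x"
    then have "((\<lambda>t. R t - c * (ln \<sigma> - ln (\<sigma> - t))) has_real_derivative radius_rate p M G t - c / (\<sigma> - t)) (at t)"
      using R_deriv[of t] x by (auto intro!: derivative_eq_intros simp: field_simps)
    moreover have "radius_rate p M G t - c / (\<sigma> - t) \<ge> 0"
      using radius_rate_lower[of t] \<open>0 < t\<close> \<open>t < x\<close> x unfolding c_def by simp
    ultimately show "\<exists>y. ((\<lambda>t. R t - c * (ln \<sigma> - ln (\<sigma> - t))) has_real_derivative y) (at t) \<and> 0 \<le> y"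
      by blast
  qed (use continuous_on_R[of 0 x] x \<sigma>_pos in \<open>auto intro!: continuous_intros\<close>)
  then show ?thesis using R_0 unfolding c_def by simp
qed

lemma R_le_log: "- \<sigma> < x \<Longrightarrow> x \<le> 0 \<Longrightarrow> R x \<le> - (sqrt 2 * \<sigma> / 2) * (ln \<sigma> - ln (\<sigma> + x))"
proof -
  assume x: "- \<sigma> < x" "x \<le> 0"
  define c where "c = sqrt 2 * \<sigma> / 2"
  have "R x + c * (ln \<sigma> - ln (\<sigma> + x)) \<le> R 0 + c * (ln \<sigma> - ln (\<sigma> + 0))"
  proof (rule DERIV_nonneg_imp_increasing_open[OF x(2)])
    fix t assume "x < t" "t < 0"
    then have "((\<lambda>t. R t + c * (ln \<sigma> - ln (\<sigma> + t))) has_real_derivative radius_rate p M G t - c / (\<sigma> + t)) (at t)"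
      using R_deriv[of t] x by (auto intro!: derivative_eq_intros simp: field_simps)
    moreover have "radius_rate p M G t - c / (\<sigma> + t) \<ge> 0"
      using radius_rate_lower[of t] \<open>x < t\<close> \<open>t < 0\<close> x unfolding c_def by simp
    ultimately show "\<exists>y. ((\<lambda>t. R t + c * (ln \<sigma> - ln (\<sigma> + t))) has_real_derivative y) (at t) \<and> 0 \<le> y"
      by blast
  qed (use continuous_on_R[of x 0] x \<sigma>_pos in \<open>auto intro!: continuous_intros\<close>)
  then show ?thesis using R_0 unfolding c_def by simp
qed

lemma R_surj: "r \<in> R ` {- \<sigma><..<\<sigma>}"
proof -
  define c where "c = sqrt 2 * \<sigma> / 2"
  have "c > 0" unfolding c_def using \<sigma>_pos by simp
  obtain x where "\<bar>x\<bar> < \<sigma>" "R x = r"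
  proof (cases "r \<ge> 0")
    case True
    define b where "b = \<sigma> - \<sigma> * exp (- r / c)"
    have "0 \<le> b" "b < \<sigma>" unfolding b_def using True \<open>c > 0\<close> \<sigma>_pos by (auto simp: mult_le_cancel_left1)
    moreover have "ln (\<sigma> - b) = ln \<sigma> - r / c" unfolding b_def using \<sigma>_pos by (simp add: ln_mult)
    moreover have "R b \<ge> c * (ln \<sigma> - ln (\<sigma> - b))" unfolding c_def by (rule R_ge_log) fact+
    ultimately have "r \<le> R b" using \<open>c > 0\<close> by simp
    then obtain x where "0 \<le> x" "x \<le> b" "R x = r"
      using IVT'[of R 0 r b] R_0 True \<open>0 \<le> b\<close> \<open>b < \<sigma>\<close> continuous_on_R[of 0 b] \<sigma>_pos by auto
    then show ?thesis using \<open>b < \<sigma>\<close> by (intro that[of x]) auto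
  next
    case False
    define b where "b = \<sigma> * exp (r / c) - \<sigma>"
    have "- \<sigma> < b" "b \<le> 0" unfolding b_def using False \<open>c > 0\<close> \<sigma>_pos
      by (auto simp: mult_le_cancel_left1 divide_nonpos_pos)
    moreover have "ln (\<sigma> + b) = ln \<sigma> + r / c" unfolding b_def using \<sigma>_pos by (simp add: ln_mult)
    moreover have "R b \<le> - c * (ln \<sigma> - ln (\<sigma> + b))" unfolding c_def by (rule R_le_log) fact+
    ultimately have "R b \<le> r" using \<open>c > 0\<close> by simp
    then obtain x where "b \<le> x" "x \<le> 0" "R x = r"
      using IVT'[of R b r 0] R_0 False \<open>- \<sigma> < b\<close> \<open>b \<le> 0\<close> continuous_on_R[of b 0] by auto
    then show ?thesis using \<open>- \<sigma> < b\<close> by (intro that[of x]) auto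
  qed
  then show ?thesis by (auto simp: abs_less_iff)
qed

lemma inj_on_R: "inj_on R {- \<sigma><..<\<sigma>}"
proof (rule linorder_inj_onI')
  fix i j assume "i \<in> {- \<sigma><..<\<sigma>}" "j \<in> {- \<sigma><..<\<sigma>}" "i < j"
  then show "R i \<noteq> R j" using R_strict_mono[of i j] by (auto simp: abs_less_iff)
qed

definition T :: "real \<Rightarrow> real" where
  "T = inv_into {- \<sigma><..<\<sigma>} R"

lemma T_bound: "\<bar>T r\<bar> < \<sigma>"
  using inv_into_into[OF R_surj[of r]] unfolding T_def by (auto simp: abs_less_iff)

lemma T_0: "T 0 = 0"
  unfolding T_def using inv_into_f_f[OF inj_on_R, of 0] R_0 \<sigma>_pos by simp

lemma T_deriv: "(T has_real_derivative inverse (radius_rate p M G (T r))) (at r)"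
  unfolding T_def using R_surj inj_on_R R_deriv radius_rate_pos
  by (intro has_real_derivative_inv_into) (auto simp: abs_less_iff less_imp_neq[symmetric])

lemma isCont_T: "isCont T r"
  using DERIV_isCont[OF T_deriv] .

definition gs_u :: "real \<Rightarrow> real" where
  "gs_u r = exp (- G (T r))"

definition gs_u' :: "real \<Rightarrow> real" where
  "gs_u' r = - sqrt 2 * T r * exp (- (p + 1)/2 * G (T r))"

definition gs_u'' :: "real \<Rightarrow> real" where
  "gs_u'' r = (phase_g p M ((T r)\<^sup>2) + (p + 1) * (T r)\<^sup>2) * exp (- p * G (T r))"

lemma T_deriv_eq:
  "(T has_real_derivative - phase_g p M ((T r)\<^sup>2) * exp (- (p - 1)/2 * G (T r)) / sqrt 2) (at r)"
proof -
  have "- (p - 1)/2 * G (T r) = - ((p - 1)/2 * G (T r))" by (simp add: field_simps)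
  then have "inverse (exp ((p - 1)/2 * G (T r))) = exp (- (p - 1)/2 * G (T r))"
    by (simp add: exp_minus)
  moreover have "inverse (radius_rate p M G (T r))
      = - phase_g p M ((T r)\<^sup>2) * inverse (exp ((p - 1)/2 * G (T r))) / sqrt 2"
    unfolding radius_rate_def by (simp add: inverse_eq_divide)
  ultimately show ?thesis using T_deriv[of r] by simp
qed

lemma G_T_deriv: "((\<lambda>r. G (T r)) has_real_derivative sqrt 2 * T r * exp (- (p - 1)/2 * G (T r))) (at r)"
proof -
  have "\<bar>T r\<bar> < \<sigma>" by (rule T_bound)
  have "((\<lambda>r. G (T r)) has_real_derivative neg_log_rate p M (T r)
      * (- phase_g p M ((T r)\<^sup>2) * exp (- (p - 1)/2 * G (T r)) / sqrt 2)) (at r)"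
    by (rule DERIV_chain2[OF G_deriv[OF T_bound] T_deriv_eq])
  moreover have "neg_log_rate p M (T r) * (- phase_g p M ((T r)\<^sup>2) * exp (- (p - 1)/2 * G (T r)) / sqrt 2)
      = sqrt 2 * T r * exp (- (p - 1)/2 * G (T r))"
    unfolding neg_log_rate_def using phase_g_square_neg[OF T_bound[of r]]
    by (simp add: field_simps real_div_sqrt)
  ultimately show ?thesis by simp
qed

lemma gs_u_deriv: "(gs_u has_real_derivative gs_u' r) (at r)"
proof -
  have "(gs_u has_real_derivative exp (- G (T r)) * (- (sqrt 2 * T r * exp (- (p - 1)/2 * G (T r))))) (at r)"
    unfolding gs_u_def[abs_def] by (auto intro!: derivative_eq_intros G_T_deriv)
  moreover have "exp (- G (T r)) * exp (- (p - 1)/2 * G (T r)) = exp (- (p + 1)/2 * G (T r))"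
    by (simp flip: exp_add add: field_simps)
  ultimately show ?thesis unfolding gs_u'_def by (simp add: algebra_simps)
qed

lemma gs_u'_deriv: "(gs_u' has_real_derivative gs_u'' r) (at r)"
proof -
  define x A E g where "x = T r" and "A = exp (- (p - 1)/2 * G x)"
    and "E = exp (- (p + 1)/2 * G x)" and "g = phase_g p M (x\<^sup>2)"
  have "(gs_u' has_real_derivative
      - sqrt 2 * (- g * A / sqrt 2) * E + (- sqrt 2 * x) * (E * (- (p + 1)/2 * (sqrt 2 * x * A)))) (at r)"
    unfolding gs_u'_def[abs_def] x_def A_def E_def g_def
    by (auto intro!: derivative_eq_intros G_T_deriv T_deriv_eq)
  moreover have "- sqrt 2 * (- g * A / sqrt 2) * E + (- sqrt 2 * x) * (E * (- (p + 1)/2 * (sqrt 2 * x * A)))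
      = (g + (p + 1) * x\<^sup>2) * (A * E)"
    by (simp add: algebra_simps power2_eq_square)
  moreover have "A * E = exp (- p * G x)"
    unfolding A_def E_def by (simp flip: exp_add add: field_simps)
  ultimately show ?thesis unfolding gs_u''_def x_def g_def by simp
qed

lemma continuous_on_gs_u'': "continuous_on S gs_u''"
proof (intro continuous_at_imp_continuous_on ballI)
  fix r
  have "isCont (\<lambda>r. phase_g p M ((T r)\<^sup>2)) r"
    using continuous_at_compose[OF isCont_T isCont_phase_g_square[OF p_gt_1]] by (simp add: o_def)
  then show "isCont gs_u'' r"
    unfolding gs_u''_def[abs_def] using DERIV_isCont[OF G_T_deriv] isCont_T by (auto intro!: continuous_intros)
qed

lemma gs_u_ode: "- gs_u'' r = \<bar>gs_u r\<bar> powr (p - 1) * gs_u r + M * \<bar>gs_u' r\<bar> powr (2*p/(p+1))"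
proof -
  define x G' where "x = T r" and "G' = G x"
  have u: "\<bar>gs_u r\<bar> powr (p - 1) * gs_u r = exp (- p * G')"
    unfolding gs_u_def x_def[symmetric] G'_def[symmetric]
    by (simp add: exp_powr_real flip: exp_add) (simp add: algebra_simps)
  have "\<bar>gs_u' r\<bar> powr (2*p/(p+1)) = (sqrt 2 * \<bar>x\<bar>) powr (2*p/(p+1)) * exp (- (p + 1)/2 * G') powr (2*p/(p+1))"
    unfolding gs_u'_def x_def[symmetric] G'_def[symmetric] by (simp add: abs_mult powr_mult)
  also have "exp (- (p + 1)/2 * G') powr (2*p/(p+1)) = exp (- p * G')"
    unfolding exp_powr_real using p_gt_1 by (simp add: field_simps)
  also have "2 * (p/(p+1)) = 2*p/(p+1)" by simp
  then have "(sqrt 2 * \<bar>x\<bar>) powr (2*p/(p+1)) = ((sqrt 2 * \<bar>x\<bar>) powr 2) powr (p/(p+1))"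
    by (simp only: powr_powr)
  also have "(sqrt 2 * \<bar>x\<bar>) powr 2 = 2 * x\<^sup>2" by (simp add: power_mult_distrib)
  finally have u': "\<bar>gs_u' r\<bar> powr (2*p/(p+1)) = (2 * x\<^sup>2) powr (p/(p+1)) * exp (- p * G')" .
  show ?thesis
    unfolding u u' gs_u''_def x_def[symmetric] G'_def[symmetric] phase_g_def by (simp add: algebra_simps)
qed

lemma ground_state_gs_u: "ground_state p M gs_u"
  unfolding ground_state_def
proof (rule exI[of _ gs_u'], rule exI[of _ gs_u''], intro conjI allI impI)
  show "\<exists>r\<ge>0. gs_u r \<noteq> 0" unfolding gs_u_def by auto
  show "gs_u' 0 = 0" unfolding gs_u'_def T_0 by simp
  show "gs_u r \<ge> 0" for r unfolding gs_u_def by simp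
qed (auto intro: has_field_derivative_at_within gs_u_deriv gs_u'_deriv gs_u_ode continuous_on_gs_u'')

end

lemma ground_state_exists: "p > 1 \<Longrightarrow> M \<le> - mu_star1 p \<Longrightarrow> \<exists>u. ground_state p M u"
  using gs_quadrature_exists gs_quadrature.ground_state_gs_u by metis

section \<open>Construction of the singular solution\<close>

text \<open>For \<open>u = w\<^bsup>-a\<^esup>\<close> with \<open>a = decay_exp p\<close> one has \<open>sfun = (a w')\<^sup>2/2\<close>, and the equation becomes the
  autonomous equation \<open>dS/d\<tau> = - a phase_g p M S\<close> for \<open>S = sfun\<close> as a function of \<open>\<tau> = ln w\<close>.
  For \<open>M < - mu_star1 p\<close> it has a solution running from \<open>g_zero2\<close> (\<open>\<tau> \<rightarrow> -\<infinity>\<close>) to \<open>g_zero1\<close>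
  (\<open>\<tau> \<rightarrow> \<infinity>\<close>), the inverse of \<open>H = \<integral> -1/(a phase_g)\<close>; then \<open>w\<close> is recovered from
  \<open>w' = sqrt (2 S (ln w)) / a\<close>.\<close>

locale singular_phase =
  fixes p M :: real and H :: "real \<Rightarrow> real"
  assumes p_gt_1: "p > 1" and M_less: "M < - mu_star1 p"
    and H_deriv: "\<And>s. g_zero1 p M < s \<Longrightarrow> s < g_zero2 p M \<Longrightarrow>
      (H has_real_derivative - 1 / (decay_exp p * phase_g p M s)) (at s)"
    and H_mid: "H ((g_zero1 p M + g_zero2 p M) / 2) = 0"

lemma singular_phase_exists:
  assumes "p > 1" "M < - mu_star1 p"
  obtains H where "singular_phase p M H"
proof -
  have M: "M \<le> - mu_star1 p" using assms by simp
  have "g_zero1 p M < g_zero2 p M"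
    using phase_g_pos_between[OF assms] phase_g_g_zero1[OF assms(1) M] phase_g_g_zero2[OF assms(1) M]
      g_zero1_le_argmax_le_g_zero2[OF assms(1) M] phase_g_argmax_sign(2)[of p M] assms
      neg_of_le_neg_mu_star1[OF assms(1) M]
    by (smt (verit))
  moreover have "isCont (\<lambda>s. - 1 / (decay_exp p * phase_g p M s)) s"
    if "g_zero1 p M < s" "s < g_zero2 p M" for s
    using phase_g_pos_between[OF assms that] isCont_phase_g[OF assms(1), of s] decay_exp_pos[OF assms(1)]
      g_zero1_pos[OF assms(1) M] that by (auto intro!: continuous_intros)
  ultimately obtain H where "\<And>s. g_zero1 p M < s \<Longrightarrow> s < g_zero2 p M \<Longrightarrow>
      (H has_real_derivative - 1 / (decay_exp p * phase_g p M s)) (at s)"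
    "H ((g_zero1 p M + g_zero2 p M) / 2) = 0"
    using antiderivative_vanishing_at[of "ereal (g_zero1 p M)" "(g_zero1 p M + g_zero2 p M) / 2"
        "ereal (g_zero2 p M)" "\<lambda>s. - 1 / (decay_exp p * phase_g p M s)"] by auto
  then have "singular_phase p M H" using assms by unfold_locales auto
  then show ?thesis by (rule that)
qed

context singular_phase
begin

abbreviation "a \<equiv> decay_exp p"
abbreviation "s1 \<equiv> g_zero1 p M"
abbreviation "s2 \<equiv> g_zero2 p M"
abbreviation "s_mid \<equiv> (g_zero1 p M + g_zero2 p M) / 2"

lemma M_le: "M \<le> - mu_star1 p"
  using M_less by simp

lemma a_pos: "a > 0"
  using decay_exp_pos[OF p_gt_1] .

lemma s1_pos: "s1 > 0"
  using g_zero1_pos[OF p_gt_1 M_le] .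

lemma s1_less_s2: "s1 < s2"
proof -
  have "phase_g p M (g_argmax p M) > 0"
    using phase_g_argmax_sign(2)[of p M] neg_of_le_neg_mu_star1[OF p_gt_1 M_le] p_gt_1 M_less by linarith
  then show ?thesis
    using g_zero1_le_argmax_le_g_zero2[OF p_gt_1 M_le] phase_g_g_zero1[OF p_gt_1 M_le] by (smt (verit))
qed

lemma phase_g_pos: "s1 < s \<Longrightarrow> s < s2 \<Longrightarrow> phase_g p M s > 0"
  using phase_g_pos_between[OF p_gt_1 M_less] .

lemma continuous_on_H: "s1 < x \<Longrightarrow> y < s2 \<Longrightarrow> continuous_on {x..y} H"
  by (intro continuous_at_imp_continuous_on ballI DERIV_isCont[OF H_deriv]) auto

lemma H_strict_antimono:
  assumes "s1 < x" "x < y" "y < s2"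
  shows "H y < H x"
proof (rule DERIV_neg_imp_decreasing_open[OF assms(2)])
  fix t assume "x < t" "t < y"
  then show "\<exists>d. (H has_real_derivative d) (at t) \<and> d < 0"
    using H_deriv[of t] phase_g_pos[of t] a_pos assms by (auto simp: divide_neg_pos)
qed (rule continuous_on_H, use assms in auto)

lemma H_ge_log_near_s1:
  obtains L where "L > 0" "\<And>s. s1 < s \<Longrightarrow> s \<le> s_mid \<Longrightarrow> H s \<ge> (ln (s_mid - s1) - ln (s - s1)) / (a * L)"
proof -
  obtain L where "L > 0" and L: "\<And>s. s1 \<le> s \<Longrightarrow> phase_g p M s \<le> L * (s - s1)"
    using phase_g_le_lipschitz_g_zero1[OF p_gt_1 M_le] by blast
  have "H s \<ge> (ln (s_mid - s1) - ln (s - s1)) / (a * L)" if s: "s1 < s" "s \<le> s_mid" for s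
  proof -
    define F where "F t = H t - (ln (s_mid - s1) - ln (t - s1)) / (a * L)" for t
    have "F s_mid \<le> F s"
    proof (rule DERIV_nonpos_imp_decreasing_open[OF s(2)])
      fix t assume "s < t" "t < s_mid"
      then have t: "s1 < t" "t < s2" using s s1_less_s2 by auto
      have "(F has_real_derivative 1 / ((t - s1) * (a * L)) - 1 / (a * phase_g p M t)) (at t)"
        unfolding F_def using t a_pos \<open>L > 0\<close> by (auto intro!: derivative_eq_intros H_deriv)
      moreover have "a * phase_g p M t \<le> (t - s1) * (a * L)"
        using mult_left_mono[OF L[of t] less_imp_le[OF a_pos]] t by (simp add: algebra_simps)
      then have "1 / ((t - s1) * (a * L)) \<le> 1 / (a * phase_g p M t)"
        using phase_g_pos[OF t] a_pos t \<open>L > 0\<close> by (intro divide_left_mono) (auto intro!: mult_pos_pos)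
      ultimately show "\<exists>y. (F has_real_derivative y) (at t) \<and> y \<le> 0"
        by (intro exI[of _ "1 / ((t - s1) * (a * L)) - 1 / (a * phase_g p M t)"]) simp
    qed (use s s1_less_s2 continuous_on_H[of s s_mid] a_pos \<open>L > 0\<close> in
        \<open>auto simp: F_def intro!: continuous_intros\<close>)
    then show ?thesis unfolding F_def using H_mid by simp
  qed
  then show ?thesis using that \<open>L > 0\<close> by blast
qed

lemma H_le_log_near_s2:
  obtains L where "L > 0" "\<And>s. s_mid \<le> s \<Longrightarrow> s < s2 \<Longrightarrow> H s \<le> (ln (s2 - s) - ln (s2 - s_mid)) / (a * L)"
proof -
  obtain L where "L > 0" and L: "\<And>s. 0 \<le> s \<Longrightarrow> s \<le> s2 \<Longrightarrow> phase_g p M s \<le> L * (s2 - s)"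
    using phase_g_le_lipschitz_g_zero2[OF p_gt_1 M_le] by blast
  have "H s \<le> (ln (s2 - s) - ln (s2 - s_mid)) / (a * L)" if s: "s_mid \<le> s" "s < s2" for s
  proof -
    define F where "F t = H t - (ln (s2 - t) - ln (s2 - s_mid)) / (a * L)" for t
    have "F s \<le> F s_mid"
    proof (rule DERIV_nonpos_imp_decreasing_open[OF s(1)])
      fix t assume "s_mid < t" "t < s"
      then have t: "s1 < t" "t < s2" using s s1_less_s2 by auto
      have "(F has_real_derivative 1 / ((s2 - t) * (a * L)) - 1 / (a * phase_g p M t)) (at t)"
        unfolding F_def using t a_pos \<open>L > 0\<close> by (auto intro!: derivative_eq_intros H_deriv)
      moreover have "a * phase_g p M t \<le> (s2 - t) * (a * L)"
        using mult_left_mono[OF L[of t] less_imp_le[OF a_pos]] t s1_pos by (simp add: algebra_simps)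
      then have "1 / ((s2 - t) * (a * L)) \<le> 1 / (a * phase_g p M t)"
        using phase_g_pos[OF t] a_pos t \<open>L > 0\<close> by (intro divide_left_mono) (auto intro!: mult_pos_pos)
      ultimately show "\<exists>y. (F has_real_derivative y) (at t) \<and> y \<le> 0"
        by (intro exI[of _ "1 / ((s2 - t) * (a * L)) - 1 / (a * phase_g p M t)"]) simp
    qed (use s s1_less_s2 s1_pos continuous_on_H[of s_mid s] a_pos \<open>L > 0\<close> in
        \<open>auto simp: F_def intro!: continuous_intros\<close>)
    then show ?thesis unfolding F_def using H_mid by simp
  qed
  then show ?thesis using that \<open>L > 0\<close> by blast
qed

lemma H_surj: "\<tau> \<in> H ` {s1<..<s2}"
proof (cases "\<tau> \<ge> 0")
  case True
  obtain L where "L > 0"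
    and L: "\<And>s. s1 < s \<Longrightarrow> s \<le> s_mid \<Longrightarrow> H s \<ge> (ln (s_mid - s1) - ln (s - s1)) / (a * L)"
    using H_ge_log_near_s1 by blast
  define e where "e = exp (- (a * L) * \<tau>)"
  have "0 < e" "e \<le> 1" unfolding e_def using True \<open>L > 0\<close> a_pos by auto
  define s where "s = s1 + (s_mid - s1) * e"
  have "(s_mid - s1) * e \<le> s_mid - s1" "(s_mid - s1) * e > 0"
    using mult_left_mono[OF \<open>e \<le> 1\<close>, of "s_mid - s1"] \<open>0 < e\<close> s1_less_s2 by auto
  then have s: "s1 < s" "s \<le> s_mid" unfolding s_def by auto
  have "ln (s - s1) = ln (s_mid - s1) + ln e"
    unfolding s_def using ln_mult[of "s_mid - s1" e] \<open>0 < e\<close> s1_less_s2 by simp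
  then have "ln (s - s1) = ln (s_mid - s1) - (a * L) * \<tau>" unfolding e_def by simp
  then have "\<tau> \<le> H s" using L[OF s] \<open>L > 0\<close> a_pos by simp
  then obtain y where "s \<le> y" "y \<le> s_mid" "H y = \<tau>"
    using IVT2'[of H s_mid \<tau> s] H_mid True s continuous_on_H[of s s_mid] s1_less_s2 by auto
  then show ?thesis using s s1_less_s2 by force
next
  case False
  obtain L where "L > 0"
    and L: "\<And>s. s_mid \<le> s \<Longrightarrow> s < s2 \<Longrightarrow> H s \<le> (ln (s2 - s) - ln (s2 - s_mid)) / (a * L)"
    using H_le_log_near_s2 by blast
  define e where "e = exp ((a * L) * \<tau>)"
  have "0 < e" "e \<le> 1"
    unfolding e_def using mult_nonneg_nonpos[of "a * L" \<tau>] False \<open>L > 0\<close> a_pos by auto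
  define s where "s = s2 - (s2 - s_mid) * e"
  have "(s2 - s_mid) * e \<le> s2 - s_mid" "(s2 - s_mid) * e > 0"
    using mult_left_mono[OF \<open>e \<le> 1\<close>, of "s2 - s_mid"] \<open>0 < e\<close> s1_less_s2 by auto
  then have s: "s_mid \<le> s" "s < s2" unfolding s_def by linarith+
  have "ln (s2 - s) = ln (s2 - s_mid) + ln e"
    unfolding s_def using ln_mult[of "s2 - s_mid" e] \<open>0 < e\<close> s1_less_s2 by simp
  then have "ln (s2 - s) = ln (s2 - s_mid) + (a * L) * \<tau>" unfolding e_def by simp
  then have "H s \<le> \<tau>" using L[OF s] \<open>L > 0\<close> a_pos by simp
  then obtain y where "s_mid \<le> y" "y \<le> s" "H y = \<tau>"
    using IVT2'[of H s \<tau> s_mid] H_mid False s continuous_on_H[of s_mid s] s1_less_s2 by auto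
  then show ?thesis using s s1_less_s2 by force
qed

lemma inj_on_H: "inj_on H {s1<..<s2}"
proof (rule linorder_inj_onI')
  fix i j assume "i \<in> {s1<..<s2}" "j \<in> {s1<..<s2}" "i < j"
  then show "H i \<noteq> H j" using H_strict_antimono[of i j] by auto
qed

definition S :: "real \<Rightarrow> real" where
  "S = inv_into {s1<..<s2} H"

lemma S_bounds: "s1 < S \<tau>" "S \<tau> < s2"
  using inv_into_into[OF H_surj[of \<tau>]] unfolding S_def by auto

lemma S_H: "s1 < s \<Longrightarrow> s < s2 \<Longrightarrow> S (H s) = s"
  unfolding S_def using inv_into_f_f[OF inj_on_H] by simp

lemma H_S: "H (S \<tau>) = \<tau>"
  unfolding S_def using f_inv_into_f[OF H_surj] .

lemma S_deriv: "(S has_real_derivative - a * phase_g p M (S \<tau>)) (at \<tau>)"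
proof -
  have "- 1 / (a * phase_g p M s) \<noteq> 0" if "s \<in> {s1<..<s2}" for s
    using phase_g_pos[of s] a_pos that by simp
  then have "(S has_real_derivative inverse (- 1 / (a * phase_g p M (S \<tau>)))) (at \<tau>)"
    unfolding S_def using H_surj inj_on_H H_deriv
    by (intro has_real_derivative_inv_into) auto
  then show ?thesis by simp
qed

lemma isCont_S: "isCont S \<tau>"
  using DERIV_isCont[OF S_deriv] .

lemma S_strict_antimono: "\<tau>1 < \<tau>2 \<Longrightarrow> S \<tau>2 < S \<tau>1"
  using H_strict_antimono[of "S \<tau>2" "S \<tau>1"] H_strict_antimono[of "S \<tau>1" "S \<tau>2"] S_bounds H_S
  by (metis linorder_neqE_linordered_idom order.asym)

lemma S_tendsto_at_top: "(S \<longlongrightarrow> s1) at_top"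
proof (rule order_tendstoI)
  fix b assume "b < s1"
  then show "\<forall>\<^sub>F \<tau> in at_top. b < S \<tau>" using S_bounds(1) less_trans by (blast intro: always_eventually)
next
  fix b assume "b > s1"
  define m where "m = min b s_mid"
  have "s1 < m" "m < s2" "m \<le> b" unfolding m_def using \<open>b > s1\<close> s1_less_s2 by (auto simp: min_def)
  then have "S \<tau> < b" if "\<tau> \<ge> H m + 1" for \<tau>
    using S_strict_antimono[of "H m" \<tau>] S_H[of m] that by simp
  then show "\<forall>\<^sub>F \<tau> in at_top. S \<tau> < b" by (rule eventually_at_top_linorderI)
qed

lemma S_tendsto_at_bot: "(S \<longlongrightarrow> s2) at_bot"
proof (rule order_tendstoI)
  fix b assume "b > s2"
  then show "\<forall>\<^sub>F \<tau> in at_bot. S \<tau> < b" using S_bounds(2) less_trans by (blast intro: always_eventually)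
next
  fix b assume "b < s2"
  define m where "m = max b s_mid"
  have "s1 < m" "m < s2" "b \<le> m" unfolding m_def using \<open>b < s2\<close> s1_less_s2 by (auto simp: max_def)
  then have "b < S \<tau>" if "\<tau> \<le> H m - 1" for \<tau>
    using S_strict_antimono[of \<tau> "H m"] S_H[of m] that by simp
  then show "\<forall>\<^sub>F \<tau> in at_bot. b < S \<tau>" by (rule eventually_at_bot_linorderI)
qed

text \<open>\<open>S\<close> as a function of \<open>w = e\<^sup>\<tau>\<close>, extended by its limit \<open>g_zero2\<close> to \<open>w \<le> 0\<close> so that the
  equation \<open>w' = sqrt (2 S) / a\<close> can be integrated through \<open>w = 0\<close>, i.e. \<open>r = 0\<close>.\<close>

definition s_of_w :: "real \<Rightarrow> real" where
  "s_of_w w = (if w > 0 then S (ln w) else s2)"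

lemma s_of_w_bounds: "s1 < s_of_w w" "s_of_w w \<le> s2"
  unfolding s_of_w_def using S_bounds s1_less_s2 by (auto simp: less_imp_le)

lemma s_of_w_pos: "s_of_w w > 0"
  using s_of_w_bounds(1)[of w] s1_pos by simp

lemma s_of_w_0: "s_of_w 0 = s2"
  unfolding s_of_w_def by simp

lemma s_of_w_eq_near: "w > 0 \<Longrightarrow> \<forall>\<^sub>F x in nhds w. s_of_w x = S (ln x)"
  using eventually_nhds_in_open[of "{0<..}" w] unfolding s_of_w_def by (auto elim!: eventually_mono)

lemma isCont_s_of_w: "isCont s_of_w w"
proof -
  consider "w > 0" | "w < 0" | "w = 0" by linarith
  then show ?thesis
  proof cases
    case 1
    have "isCont (\<lambda>w. S (ln w)) w"
      using 1 by (intro continuous_at_compose[of _ ln S, unfolded o_def] continuous_intros isCont_S) auto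
    then show ?thesis using isCont_cong[OF s_of_w_eq_near[OF 1]] by simp
  next
    case 2
    have "\<forall>\<^sub>F x in nhds w. s_of_w x = s2"
      using eventually_nhds_in_open[of "{..<0}" w] 2 unfolding s_of_w_def by (auto elim!: eventually_mono)
    then show ?thesis using isCont_cong by fastforce
  next
    case 3
    have "(s_of_w \<longlongrightarrow> s2) (at_right 0)"
    proof (rule Lim_transform_eventually[OF filterlim_compose[OF S_tendsto_at_bot ln_at_0]])
      show "\<forall>\<^sub>F x in at_right 0. S (ln x) = s_of_w x"
        unfolding s_of_w_def by (auto simp: eventually_at_right_field intro: exI[of _ 1])
    qed
    moreover have "(s_of_w \<longlongrightarrow> s2) (at_left 0)"
    proof (rule Lim_transform_eventually[OF tendsto_const])
      show "\<forall>\<^sub>F x in at_left 0. s2 = s_of_w x"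
        unfolding s_of_w_def by (auto simp: eventually_at_left_field intro: exI[of _ "-1"])
    qed
    ultimately show ?thesis using 3 s_of_w_0 unfolding isCont_def by (simp add: filterlim_at_split)
  qed
qed

lemma s_of_w_deriv: "w > 0 \<Longrightarrow> (s_of_w has_real_derivative - a * phase_g p M (s_of_w w) / w) (at w)"
proof -
  assume "w > 0"
  have "((\<lambda>w. S (ln w)) has_real_derivative - a * phase_g p M (S (ln w)) * (1 / w)) (at w)"
    by (rule DERIV_chain2[OF S_deriv]) (use \<open>w > 0\<close> in \<open>auto intro!: derivative_eq_intros\<close>)
  then show ?thesis
    using DERIV_cong_ev[OF refl s_of_w_eq_near[OF \<open>w > 0\<close>] refl] \<open>w > 0\<close> unfolding s_of_w_def
    by (simp add: field_simps)
qed

lemma s_of_w_tendsto_at_top: "(s_of_w \<longlongrightarrow> s1) at_top"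
proof (rule Lim_transform_eventually[OF filterlim_compose[OF S_tendsto_at_top ln_at_top]])
  show "\<forall>\<^sub>F x in at_top. S (ln x) = s_of_w x"
    unfolding s_of_w_def by (intro eventually_at_top_linorderI[of 1]) auto
qed

definition w_rate :: "real \<Rightarrow> real" where
  "w_rate w = a / sqrt (2 * s_of_w w)"

definition w_rate_min :: real where
  "w_rate_min = a / sqrt (2 * s2)"

definition w_rate_max :: real where
  "w_rate_max = a / sqrt (2 * s1)"

lemma w_rate_min_pos: "w_rate_min > 0"
  unfolding w_rate_min_def using a_pos s1_pos s1_less_s2 by simp

lemma w_rate_max_pos: "w_rate_max > 0"
  unfolding w_rate_max_def using a_pos s1_pos by simp

lemma w_rate_bounds: "w_rate_min \<le> w_rate w" "w_rate w \<le> w_rate_max"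
  unfolding w_rate_def w_rate_min_def w_rate_max_def using a_pos s_of_w_bounds[of w] s_of_w_pos[of w] s1_pos
  by (auto intro!: divide_left_mono mult_pos_pos)

lemma isCont_w_rate: "isCont w_rate w"
  unfolding w_rate_def[abs_def] using isCont_s_of_w s_of_w_pos
  by (auto intro!: continuous_intros simp: less_imp_neq[symmetric])

end

locale singular_quadrature = singular_phase +
  fixes Rw :: "real \<Rightarrow> real"
  assumes Rw_deriv: "\<And>w. (Rw has_real_derivative w_rate w) (at w)"
    and Rw_0: "Rw 0 = 0"

lemma singular_quadrature_exists:
  assumes "p > 1" "M < - mu_star1 p"
  obtains H Rw where "singular_quadrature p M H Rw"
proof -
  obtain H where H: "singular_phase p M H" using singular_phase_exists[OF assms] .
  obtain Rw where "\<And>w. (Rw has_real_derivative singular_phase.w_rate p M H w) (at w)" "Rw 0 = 0"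
    using antiderivative_vanishing_at[of "-\<infinity>" 0 "\<infinity>" "singular_phase.w_rate p M H"]
      singular_phase.isCont_w_rate[OF H] by auto
  then have "singular_quadrature p M H Rw"
    using H by (simp add: singular_quadrature_def singular_quadrature_axioms_def)
  then show ?thesis by (rule that)
qed

context singular_quadrature
begin

lemma Rw_increment_bounds:
  assumes "x \<le> y"
  shows "w_rate_min * (y - x) \<le> Rw y - Rw x" "Rw y - Rw x \<le> w_rate_max * (y - x)"
proof -
  have "Rw x - w_rate_min * x \<le> Rw y - w_rate_min * y"
  proof (rule DERIV_nonneg_imp_increasing_open[OF assms])
    fix t
    have "((\<lambda>w. Rw w - w_rate_min * w) has_real_derivative w_rate t - w_rate_min) (at t)"
      using Rw_deriv[of t] by (auto intro!: derivative_eq_intros)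
    then show "\<exists>d. ((\<lambda>w. Rw w - w_rate_min * w) has_real_derivative d) (at t) \<and> 0 \<le> d"
      using w_rate_bounds(1)[of t] by auto
  qed (auto intro!: continuous_intros continuous_at_imp_continuous_on DERIV_isCont[OF Rw_deriv])
  then show "w_rate_min * (y - x) \<le> Rw y - Rw x" by (simp add: algebra_simps)
  have "Rw y - w_rate_max * y \<le> Rw x - w_rate_max * x"
  proof (rule DERIV_nonpos_imp_decreasing_open[OF assms])
    fix t
    have "((\<lambda>w. Rw w - w_rate_max * w) has_real_derivative w_rate t - w_rate_max) (at t)"
      using Rw_deriv[of t] by (auto intro!: derivative_eq_intros)
    then show "\<exists>d. ((\<lambda>w. Rw w - w_rate_max * w) has_real_derivative d) (at t) \<and> d \<le> 0"
      using w_rate_bounds(2)[of t] by auto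
  qed (auto intro!: continuous_intros continuous_at_imp_continuous_on DERIV_isCont[OF Rw_deriv])
  then show "Rw y - Rw x \<le> w_rate_max * (y - x)" by (simp add: algebra_simps)
qed

lemma Rw_strict_mono: "strict_mono Rw"
  using Rw_increment_bounds(1) w_rate_min_pos
  by (intro strict_monoI) (smt (verit) mult_pos_pos)

lemma Rw_surj: "r \<in> range Rw"
proof -
  have cont: "continuous_on {x..y} Rw" for x y
    by (intro continuous_at_imp_continuous_on ballI DERIV_isCont[OF Rw_deriv])
  show ?thesis
  proof (cases "r \<ge> 0")
    case True
    then have "r \<le> Rw (r / w_rate_min)" using Rw_increment_bounds(1)[of 0 "r / w_rate_min"] w_rate_min_pos Rw_0 by simp
    then show ?thesis using IVT'[of Rw 0 r "r / w_rate_min"] True Rw_0 w_rate_min_pos cont by force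
  next
    case False
    then have "Rw (r / w_rate_min) \<le> r"
      using Rw_increment_bounds(1)[of "r / w_rate_min" 0] w_rate_min_pos Rw_0 by (simp add: divide_nonpos_pos)
    then show ?thesis using IVT'[of Rw "r / w_rate_min" r 0] False Rw_0 w_rate_min_pos cont
      by (force simp: divide_nonpos_pos)
  qed
qed

definition W :: "real \<Rightarrow> real" where
  "W = inv_into UNIV Rw"

lemma Rw_W: "Rw (W r) = r"
  unfolding W_def using f_inv_into_f[OF Rw_surj] .

lemma W_0: "W 0 = 0"
  unfolding W_def using inv_into_f_f[OF strict_mono_imp_inj_on[OF Rw_strict_mono], of 0] Rw_0 by simp

lemma W_deriv: "(W has_real_derivative sqrt (2 * s_of_w (W r)) / a) (at r)"
proof -
  have "w_rate w \<noteq> 0" for w using w_rate_bounds(1)[of w] w_rate_min_pos by simp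
  then have "(W has_real_derivative inverse (w_rate (W r))) (at r)"
    unfolding W_def using Rw_surj strict_mono_imp_inj_on[OF Rw_strict_mono] Rw_deriv
    by (intro has_real_derivative_inv_into) auto
  then show ?thesis unfolding w_rate_def by (simp add: inverse_eq_divide)
qed

lemma isCont_W: "isCont W r"
  using DERIV_isCont[OF W_deriv] .

lemma W_ge: "r \<ge> 0 \<Longrightarrow> W r \<ge> r / w_rate_max"
proof -
  assume "r \<ge> 0"
  have "W r \<ge> 0"
    using strict_mono_less_eq[OF Rw_strict_mono, of 0 "W r"] Rw_W Rw_0 \<open>r \<ge> 0\<close> by simp
  then have "r \<le> w_rate_max * W r" using Rw_increment_bounds(2)[of 0 "W r"] Rw_W Rw_0 by simp
  then show ?thesis using w_rate_max_pos by (simp add: pos_divide_le_eq mult.commute)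
qed

lemma W_pos: "r > 0 \<Longrightarrow> W r > 0"
  using W_ge[of r] w_rate_max_pos by (smt (verit) divide_pos_pos)

lemma filterlim_W_at_top: "filterlim W at_top at_top"
proof (rule filterlim_at_top_mono)
  show "LIM r at_top. (1 / w_rate_max) * r :> at_top"
    using w_rate_max_pos by (intro filterlim_tendsto_pos_mult_at_top[OF tendsto_const _ filterlim_ident]) simp
  show "\<forall>\<^sub>F r in at_top. (1 / w_rate_max) * r \<le> W r"
    using W_ge by (intro eventually_at_top_linorderI[of 0]) auto
qed

definition sing_u :: "real \<Rightarrow> real" where
  "sing_u r = W r powr (- a)"

definition sing_u' :: "real \<Rightarrow> real" where
  "sing_u' r = - (W r powr (- a - 1) * sqrt (2 * s_of_w (W r)))"

definition sing_u'' :: "real \<Rightarrow> real" where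
  "sing_u'' r = (phase_g p M (s_of_w (W r)) + (p + 1) * s_of_w (W r)) * W r powr (- a - 2)"

lemma sing_u_deriv: "r > 0 \<Longrightarrow> (sing_u has_real_derivative sing_u' r) (at r)"
  using DERIV_fun_powr[OF W_deriv W_pos, of r "- a"] a_pos unfolding sing_u_def[abs_def] sing_u'_def
  by simp

lemma sqrt_s_of_W_deriv:
  assumes "r > 0"
  shows "((\<lambda>r. sqrt (2 * s_of_w (W r))) has_real_derivative - phase_g p M (s_of_w (W r)) / W r) (at r)"
proof -
  define s g Q where "s = s_of_w (W r)" and "g = phase_g p M s" and "Q = sqrt (2 * s)"
  have "s > 0" unfolding s_def by (rule s_of_w_pos)
  have "((\<lambda>r. s_of_w (W r)) has_real_derivative (- a * g / W r) * (Q / a)) (at r)"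
    using DERIV_chain2[OF s_of_w_deriv[OF W_pos[OF assms]] W_deriv] unfolding g_def s_def Q_def by simp
  then have "((\<lambda>r. sqrt (2 * s_of_w (W r))) has_real_derivative
      (inverse (sqrt (2 * s)) / 2) * (2 * ((- a * g / W r) * (Q / a)))) (at r)"
    using \<open>s > 0\<close> unfolding s_def by (auto intro!: derivative_eq_intros)
  moreover have "(inverse (sqrt (2 * s)) / 2) * (2 * ((- a * g / W r) * (Q / a))) = - g / W r"
    unfolding Q_def using \<open>s > 0\<close> a_pos by (simp add: field_simps)
  ultimately show ?thesis unfolding g_def s_def by simp
qed

lemma sing_u'_deriv:
  assumes "r > 0"
  shows "(sing_u' has_real_derivative sing_u'' r) (at r)"
proof -
  define s g Q P where "s = s_of_w (W r)" and "g = phase_g p M s" and "Q = sqrt (2 * s)"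
    and "P = W r powr (- a - 2)"
  have "s > 0" "W r > 0" unfolding s_def using s_of_w_pos W_pos[OF assms] by auto
  have "((\<lambda>r. W r powr (- a - 1)) has_real_derivative (- a - 1) * W r powr (- a - 1 - 1) * (Q / a)) (at r)"
    using DERIV_fun_powr[OF W_deriv \<open>W r > 0\<close>, of "- a - 1"] unfolding Q_def s_def by simp
  from DERIV_minus[OF DERIV_mult[OF this sqrt_s_of_W_deriv[OF assms]]]
  have deriv: "(sing_u' has_real_derivative
      - ((- a - 1) * W r powr (- a - 1 - 1) * (Q / a) * Q + - g / W r * W r powr (- a - 1))) (at r)"
    unfolding sing_u'_def[abs_def] g_def s_def Q_def by (simp add: mult.commute)
  have e1: "W r powr (- a - 1 - 1) = P" unfolding P_def by (simp add: algebra_simps)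
  have e2: "W r powr (- a - 1) = P * W r"
  proof -
    have "- a - 1 = (- a - 2) + 1" by simp
    then have "W r powr (- a - 1) = W r powr ((- a - 2) + 1)" by (rule arg_cong)
    also have "\<dots> = P * W r powr 1" unfolding P_def by (rule powr_add)
    finally show ?thesis using \<open>W r > 0\<close> by simp
  qed
  have "- ((- a - 1) * W r powr (- a - 1 - 1) * (Q / a) * Q + - g / W r * W r powr (- a - 1))
      = (a + 1) / a * (Q * Q) * P + g * P"
    unfolding e1 e2 using a_pos \<open>W r > 0\<close> by (simp add: field_simps)
  also have "(a + 1) / a * (Q * Q) = (p + 1) * s"
  proof -
    have "Q * Q = 2 * s" unfolding Q_def using \<open>s > 0\<close> by simp
    moreover have "(a + 1) / a * 2 = p + 1" unfolding decay_exp_def using p_gt_1 by (simp add: field_simps)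
    ultimately show ?thesis by (metis mult.assoc mult.commute)
  qed
  also have "(p + 1) * s * P + g * P = sing_u'' r"
    unfolding sing_u''_def s_def[symmetric] g_def[symmetric] P_def[symmetric] by (simp add: algebra_simps)
  finally show ?thesis using deriv by simp
qed

lemma isCont_sing_u'': "r > 0 \<Longrightarrow> isCont sing_u'' r"
proof -
  assume "r > 0"
  have "isCont (\<lambda>r. s_of_w (W r)) r"
    using continuous_at_compose[OF isCont_W isCont_s_of_w] by (simp add: o_def)
  moreover from this have "isCont (\<lambda>r. phase_g p M (s_of_w (W r))) r"
    using continuous_at_compose[of r "\<lambda>r. s_of_w (W r)" "phase_g p M"]
      isCont_phase_g[OF p_gt_1 s_of_w_pos[of "W r"]] by (simp add: o_def)
  ultimately show "isCont sing_u'' r"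
    unfolding sing_u''_def[abs_def] using isCont_W W_pos[OF \<open>r > 0\<close>] by (auto intro!: continuous_intros)
qed

lemma sing_u_ode:
  assumes "r > 0"
  shows "- sing_u'' r = \<bar>sing_u r\<bar> powr (p - 1) * sing_u r + M * \<bar>sing_u' r\<bar> powr (2*p/(p+1))"
proof -
  define s where "s = s_of_w (W r)"
  have "s > 0" "W r > 0" unfolding s_def using s_of_w_pos W_pos[OF assms] by auto
  have "\<bar>sing_u r\<bar> powr (p - 1) * sing_u r = W r powr (- a * (p - 1)) * W r powr (- a)"
    unfolding sing_u_def by (simp add: powr_powr)
  also have "\<dots> = W r powr (- a * (p - 1) + - a)" by (rule powr_add[symmetric])
  also have "- a * (p - 1) + - a = - a - 2" unfolding decay_exp_def using p_gt_1 by (simp add: field_simps)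
  finally have u: "\<bar>sing_u r\<bar> powr (p - 1) * sing_u r = W r powr (- a - 2)" .
  have A: "- a - 1 = - (p + 1)/(p - 1)" and B: "- a - 2 = - (2 * p)/(p - 1)"
    unfolding decay_exp_def using p_gt_1 by (simp_all add: field_simps)
  have cancel: "(- c / y) * (z / c) = - z / y" if "y \<noteq> 0" "c \<noteq> 0" for y c z :: real
    using that by (simp add: field_simps)
  have "(- a - 1) * (2*p/(p+1)) = - a - 2"
    unfolding A B by (rule cancel) (use p_gt_1 in auto)
  then have "(W r powr (- a - 1)) powr (2*p/(p+1)) = W r powr (- a - 2)" by (simp add: powr_powr)
  moreover have "sqrt (2 * s) powr (2*p/(p+1)) = (2 * s) powr (p/(p+1))"
  proof -
    have "2 * (p/(p+1)) = 2*p/(p+1)" by simp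
    then have "sqrt (2 * s) powr (2*p/(p+1)) = (sqrt (2 * s) powr 2) powr (p/(p+1))"
      by (simp only: powr_powr)
    then show ?thesis using \<open>s > 0\<close> by simp
  qed
  moreover have "\<bar>sing_u' r\<bar> = W r powr (- a - 1) * sqrt (2 * s)"
    unfolding sing_u'_def s_def using s_of_w_pos[of "W r"] by (simp add: abs_mult)
  ultimately have u': "\<bar>sing_u' r\<bar> powr (2*p/(p+1)) = (2 * s) powr (p/(p+1)) * W r powr (- a - 2)"
    using \<open>s > 0\<close> by (simp add: powr_mult)
  show ?thesis
    unfolding u u' sing_u''_def s_def[symmetric] phase_g_def by (simp add: algebra_simps)
qed

lemma pos_solution_sing_u: "pos_solution p M sing_u"
  unfolding pos_solution_def
proof (rule exI[of _ sing_u'], rule exI[of _ sing_u''], intro conjI allI impI)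
  show "continuous_on {0<..} sing_u''"
    by (intro continuous_at_imp_continuous_on ballI isCont_sing_u'') auto
  show "sing_u r > 0" if "r > 0" for r
    unfolding sing_u_def using W_pos[OF that] by simp
qed (auto intro: sing_u_deriv sing_u'_deriv sing_u_ode)

lemma sing_u_asymp_0: "sing_u \<sim>[at_right 0] U1 p M"
proof -
  define c where "c = sqrt (2 * s2) / a"
  have "c > 0" unfolding c_def using a_pos s1_pos s1_less_s2 by simp
  have "((\<lambda>y. (W y - W 0) / (y - 0)) \<longlongrightarrow> c) (at 0)"
    using W_deriv[of 0] unfolding has_field_derivative_iff c_def W_0 s_of_w_0 .
  then have "((\<lambda>r. W r / r) \<longlongrightarrow> c) (at_right 0)"
    using W_0 by (simp add: tendsto_mono[OF at_within_le_at])
  then have "sing_u \<sim>[at_right 0] (\<lambda>r. c powr (- a) * r powr (- a))"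
    using \<open>c > 0\<close> by (intro asymp_equiv_powr_of_ratio) (auto simp: eventually_at_filter sing_u_def)
  moreover have "U1 p M = (\<lambda>r. c powr (- a) * r powr (- a))"
    unfolding U1_def X1_eq_coeff_of_g_zero2[OF p_gt_1 M_le] coeff_of_s_def c_def decay_exp_def by auto
  ultimately show ?thesis by simp
qed

lemma sing_u_asymp_at_top: "sing_u \<sim>[at_top] U2 p M"
proof -
  define c where "c = sqrt (2 * s1) / a"
  have "c > 0" unfolding c_def using a_pos s1_pos by simp
  have "((\<lambda>r. W r / r) \<longlongrightarrow> c) at_top"
    unfolding c_def
  proof (rule tendsto_ratio_at_top_of_deriv)
    show "((\<lambda>r. sqrt (2 * s_of_w (W r)) / a) \<longlongrightarrow> sqrt (2 * s1) / a) at_top"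
      using filterlim_compose[OF s_of_w_tendsto_at_top filterlim_W_at_top] a_pos
      by (auto intro!: tendsto_intros)
  qed (use W_deriv in simp)
  then have "sing_u \<sim>[at_top] (\<lambda>r. c powr (- a) * r powr (- a))"
    using \<open>c > 0\<close> by (intro asymp_equiv_powr_of_ratio eventually_gt_at_top) (auto simp: sing_u_def)
  moreover have "U2 p M = (\<lambda>r. c powr (- a) * r powr (- a))"
    unfolding U2_def X2_eq_coeff_of_g_zero1[OF p_gt_1 M_le] coeff_of_s_def c_def decay_exp_def by auto
  ultimately show ?thesis by simp
qed

end

lemma singular_solution_exists:
  assumes "p > 1" "M < - mu_star1 p"
  shows "\<exists>u. pos_solution p M u \<and> u \<sim>[at_right 0] U1 p M \<and> u \<sim>[at_top] U2 p M"
  using singular_quadrature_exists[OF assms] singular_quadrature.pos_solution_sing_u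
    singular_quadrature.sing_u_asymp_0 singular_quadrature.sing_u_asymp_at_top by metis

theorem theorem4p19:
  fixes p M :: real
  assumes "p > 1"
  shows "((\<exists>u. ground_state p M u) \<longleftrightarrow> M \<le> - mu_star1 p) \<and>
         (\<forall>u. ground_state p M u \<longrightarrow> u \<sim>[at_top] U2 p M) \<and>
         (M < - mu_star1 p \<longrightarrow>
            (\<exists>u. pos_solution p M u \<and> u \<sim>[at_right 0] U1 p M \<and> u \<sim>[at_top] U2 p M))"
proof (intro conjI allI impI iffI)
  show "\<exists>u. ground_state p M u \<Longrightarrow> M \<le> - mu_star1 p"
    using ground_state_profile_of_ground_state[OF assms] ground_state_profile.le_neg_mu_star1 by metis
  show "M \<le> - mu_star1 p \<Longrightarrow> \<exists>u. ground_state p M u"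
    by (rule ground_state_exists[OF assms])
  show "ground_state p M u \<Longrightarrow> u \<sim>[at_top] U2 p M" for u
    using ground_state_profile_of_ground_state[OF assms] ground_state_profile.asymp_U2 by metis
  show "M < - mu_star1 p \<Longrightarrow> \<exists>u. pos_solution p M u \<and> u \<sim>[at_right 0] U1 p M \<and> u \<sim>[at_top] U2 p M"
    by (rule singular_solution_exists[OF assms])
qed

end
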